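(* Let $n\geq3$ and $\lambda=(\lambda_1,\dots,\lambda_n)\in\mathbb{R}^n$ with $\lambda_1+\dots+\lambda_n>0$ and $N(\lambda)=n$. Then for every integer $k\geq1$, \[\sum_{P\in\mathcal{P}^k_{ord}(\lambda)}(-1)^{|P|}\varepsilon(P)\varepsilon'(P)=0.\]
   Context: $s_J(\lambda)=\sum_{i\in J}\lambda_i$. $\delta(\lambda)$ is the minimum of $s_J(\lambda)/|J|$ over subsets $J$ with $s_J(\lambda)>0$; when $\delta(\lambda)>0$, $N(\lambda)$ is the minimum of $|J|$ over subsets $J$ with $s_J(\lambda)/|J|=\delta(\lambda)$. Ordered partitions $P=(I_1,\dots,I_r)$ of $\{1,\dots,n\}$ into nonempty blocks, $|P|=r$. $\mathcal{P}_{ord}(\lambda)$: those with $s_{I_1}(\lambda)+\dots+s_{I_i}(\lambda)>0$ for all $i$. $\mathcal{P}^k_{ord}(\lambda)$: those in $\mathcal{P}_{ord}(\lambda)$ having exactly $2k$ or $2k+1$ blocks of odd cardinality. $\varepsilon(P)=\mathrm{sgn}(\sigma_P)$, where $\sigma_P$ is the unique permutation with $\sigma_P^{-1}$ mapping $\{n_1+\dots+n_i+1,\dots,n_1+\dots+n_{i+1}\}$ increasingly onto $I_{i+1}$ ($n_i=|I_i|$); $\varepsilon'(P)=(-1)^{\frac12\sum_i|I_i|(|I_i|-1)}$. *)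

theory Defs
  imports Complex_Main "HOL-Combinatorics.Permutations"
begin

(* lambda = (lam 1, ..., lam n); values of lam outside {1..n} are irrelevant. *)

definition sJ :: "(nat \<Rightarrow> real) \<Rightarrow> nat set \<Rightarrow> real" where
  "sJ lam J = (\<Sum>i\<in>J. lam i)"

definition delta :: "nat \<Rightarrow> (nat \<Rightarrow> real) \<Rightarrow> real" where
  "delta n lam = Min {sJ lam J / real (card J) | J. J \<subseteq> {1..n} \<and> sJ lam J > 0}"

definition Nlam :: "nat \<Rightarrow> (nat \<Rightarrow> real) \<Rightarrow> nat" where
  "Nlam n lam = Min {card J | J. J \<subseteq> {1..n} \<and> sJ lam J / real (card J) = delta n lam}"

definition ord_partitions :: "nat \<Rightarrow> nat set list set" where
  "ord_partitions n = {P. (\<forall>I\<in>set P. I \<noteq> {}) \<and>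
      (\<forall>i<length P. \<forall>j<length P. i \<noteq> j \<longrightarrow> P ! i \<inter> P ! j = {}) \<and>
      \<Union>(set P) = {1..n}}"

definition Pord :: "nat \<Rightarrow> (nat \<Rightarrow> real) \<Rightarrow> nat set list set" where
  "Pord n lam = {P \<in> ord_partitions n.
      \<forall>i\<in>{1..length P}. sum_list (map (sJ lam) (take i P)) > 0}"

definition odd_blocks :: "nat set list \<Rightarrow> nat" where
  "odd_blocks P = length (filter (\<lambda>I. odd (card I)) P)"

definition Pord_k :: "nat \<Rightarrow> (nat \<Rightarrow> real) \<Rightarrow> nat \<Rightarrow> nat set list set" where
  "Pord_k n lam k = {P \<in> Pord n lam. odd_blocks P = 2*k \<or> odd_blocks P = 2*k+1}"

definition sigma_inv :: "nat set list \<Rightarrow> nat \<Rightarrow> nat" where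
  "sigma_inv P = (\<lambda>j. let xs = concat (map sorted_list_of_set P) in
      if 1 \<le> j \<and> j \<le> length xs then xs ! (j - 1) else j)"

definition sigma :: "nat set list \<Rightarrow> nat \<Rightarrow> nat" where
  "sigma P = inv (sigma_inv P)"

definition eps :: "nat set list \<Rightarrow> int" where
  "eps P = sign (sigma P)"

definition eps' :: "nat set list \<Rightarrow> int" where
  "eps' P = (-1) ^ ((\<Sum>I\<leftarrow>P. card I * (card I - 1)) div 2)"

end

theory Submission
  imports Defs "HOL-Library.Multiset" "HOL-Library.Product_Lexorder"
    "HOL-Computational_Algebra.Polynomial"
begin

text \<open>Collect the ordered partitions into the generating polynomial
  \<open>F(t) = \<Sum>\<^sub>P (-1)\<^bsup>|P|\<^esup> \<epsilon>(P) \<epsilon>'(P) t\<^bsup>#odd blocks of P\<^esup>\<close>; we show \<open>F = 0\<close>.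
  The sign \<open>\<epsilon>(P)\<close> is a product of inversion signs between blocks, and a block of size \<open>m\<close>
  contributes \<open>(-1)\<^bsup>m(m-1)/2\<^esup> t\<^bsup>m mod 2\<^esup>\<close>. This polynomial expands as a signed sum over
  orderings of the block into pieces of size one and two (singletons weighted \<open>t\<close>, pairs
  \<open>-1 \<plusminus> t\<^sup>2\<close>), sorted by a key that decreases with the average of \<open>\<lambda>\<close> on a piece.
  Substituting, \<open>F\<close> becomes a sum over sequences \<open>s\<close> of pieces covering \<open>{1..n}\<close>, each weighted
  by a signed count of the ways to cut \<open>s\<close> into sorted runs whose prefix unions have positive
  \<open>\<lambda>\<close>-sum. As \<open>N(\<lambda>) = n\<close>, every proper subset with positive sum has average above the
  total average; this forces a position of \<open>s\<close> where cutting and merging cancel, so each count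
  vanishes (\<open>n \<ge> 3\<close> guarantees that \<open>s\<close> has at least two pieces).\<close>

section \<open>Disjoint lists of sets\<close>

definition disjoint_list :: "'a set list \<Rightarrow> bool" where
  "disjoint_list P \<longleftrightarrow> (\<forall>i<length P. \<forall>j<length P. i \<noteq> j \<longrightarrow> P ! i \<inter> P ! j = {})"

lemma disjoint_list_Nil [simp]: "disjoint_list []"
  by (simp add: disjoint_list_def)

lemma disjoint_list_Cons:
  "disjoint_list (A # P) \<longleftrightarrow> A \<inter> \<Union>(set P) = {} \<and> disjoint_list P"
proof
  assume d: "disjoint_list (A # P)"
  have "A \<inter> P ! j = {}" if "j < length P" for j
    using d that unfolding disjoint_list_def
    by (metis Suc_less_eq length_Cons nat.simps(3) nth_Cons_0 nth_Cons_Suc zero_less_Suc)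
  hence "A \<inter> \<Union>(set P) = {}" by (auto simp: in_set_conv_nth disjoint_iff)
  moreover have "disjoint_list P"
    using d unfolding disjoint_list_def by (metis Suc_less_eq length_Cons nth_Cons_Suc old.nat.inject)
  ultimately show "A \<inter> \<Union>(set P) = {} \<and> disjoint_list P" by blast
next
  assume h: "A \<inter> \<Union>(set P) = {} \<and> disjoint_list P"
  show "disjoint_list (A # P)" unfolding disjoint_list_def
  proof (intro allI impI)
    fix i j assume ij: "i < length (A # P)" "j < length (A # P)" "i \<noteq> j"
    show "(A # P) ! i \<inter> (A # P) ! j = {}"
    proof (cases i; cases j)
      fix j' assume "i = 0" "j = Suc j'"
      thus ?thesis using h ij nth_mem by fastforce
    next
      fix i' assume "i = Suc i'" "j = 0"
      thus ?thesis using h ij nth_mem by fastforce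
    next
      fix i' j' assume "i = Suc i'" "j = Suc j'"
      thus ?thesis using h ij unfolding disjoint_list_def by auto
    qed (use ij in auto)
  qed
qed

lemma disjoint_list_append:
  "disjoint_list (xs @ ys) \<longleftrightarrow> disjoint_list xs \<and> disjoint_list ys \<and> \<Union>(set xs) \<inter> \<Union>(set ys) = {}"
  by (induction xs) (auto simp: disjoint_list_Cons)

lemma disjoint_list_distinct: "disjoint_list xs \<Longrightarrow> \<forall>A\<in>set xs. A \<noteq> {} \<Longrightarrow> distinct xs"
  by (induction xs) (auto simp: disjoint_list_Cons)

lemma disjoint_list_take: "disjoint_list xs \<Longrightarrow> disjoint_list (take u xs)"
  by (metis append_take_drop_id disjoint_list_append)

lemma disjoint_list_drop: "disjoint_list xs \<Longrightarrow> disjoint_list (drop u xs)"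
  by (metis append_take_drop_id disjoint_list_append)

lemma disjoint_list_iff_pairwise:
  "distinct xs \<Longrightarrow> disjoint_list xs \<longleftrightarrow> (\<forall>A\<in>set xs. \<forall>B\<in>set xs. A \<noteq> B \<longrightarrow> A \<inter> B = {})"
  unfolding disjoint_list_def by (metis distinct_conv_nth nth_mem in_set_conv_nth)

lemma card_Union_disjoint_list:
  "disjoint_list xs \<Longrightarrow> \<forall>A\<in>set xs. finite A \<Longrightarrow> card (\<Union>(set xs)) = sum_list (map card xs)"
  by (induction xs) (auto simp: disjoint_list_Cons card_Un_disjoint)

lemma even_card_Union_disjoint_list:
  "disjoint_list xs \<Longrightarrow> \<forall>A\<in>set xs. finite A \<and> even (card A) \<Longrightarrow> even (card (\<Union>(set xs)))"
  by (induction xs) (auto simp: disjoint_list_Cons card_Un_disjoint)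

lemma length_le_card_Union_disjoint_list:
  "disjoint_list xs \<Longrightarrow> \<forall>A\<in>set xs. finite A \<and> A \<noteq> {} \<Longrightarrow> length xs \<le> card (\<Union>(set xs))"
proof (induction xs)
  case (Cons A xs)
  hence "card A \<ge> 1" by (simp add: Suc_leI card_gt_0_iff)
  thus ?case using Cons by (auto simp: disjoint_list_Cons card_Un_disjoint)
qed simp

lemma Union_take_Suc: "u < length s \<Longrightarrow> \<Union>(set (take (Suc u) s)) = \<Union>(set (take u s)) \<union> s ! u"
  by (auto simp: take_Suc_conv_app_nth)

lemma disjoint_list_Union_take_nth:
  assumes "disjoint_list s" "u < length s"
  shows "\<Union>(set (take u s)) \<inter> s ! u = {}"
proof -
  have "disjoint_list (take u s @ [s ! u])"
    using disjoint_list_take[OF assms(1), of "Suc u"] assms(2) by (simp add: take_Suc_conv_app_nth)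
  thus ?thesis by (simp add: disjoint_list_append)
qed

lemma sJ_Un: "finite A \<Longrightarrow> finite B \<Longrightarrow> A \<inter> B = {} \<Longrightarrow> sJ lam (A \<union> B) = sJ lam A + sJ lam B"
  by (simp add: sJ_def sum.union_disjoint)

lemma sJ_Union_disjoint_list:
  "disjoint_list xs \<Longrightarrow> \<forall>A\<in>set xs. finite A \<Longrightarrow> sJ lam (\<Union>(set xs)) = sum_list (map (sJ lam) xs)"
  by (induction xs) (auto simp: disjoint_list_Cons sJ_def sum.union_disjoint)


section \<open>Inversion signs of ordered partitions\<close>

definition inv_count :: "'a::linorder set \<Rightarrow> 'a set \<Rightarrow> nat" where
  "inv_count A B = (\<Sum>a\<in>A. card {b\<in>B. b < a})"

definition inv_sign :: "'a::linorder set \<Rightarrow> 'a set \<Rightarrow> int" where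
  "inv_sign A B = (-1) ^ inv_count A B"

lemma inv_count_Un_left:
  "finite A \<Longrightarrow> finite B \<Longrightarrow> A \<inter> B = {} \<Longrightarrow> inv_count (A \<union> B) C = inv_count A C + inv_count B C"
  by (simp add: inv_count_def sum.union_disjoint)

lemma inv_count_Un_right:
  assumes "finite B" "finite C" "B \<inter> C = {}"
  shows "inv_count A (B \<union> C) = inv_count A B + inv_count A C"
proof -
  have "card {b\<in>B \<union> C. b < a} = card {b\<in>B. b < a} + card {b\<in>C. b < a}" for a
  proof -
    have "{b\<in>B \<union> C. b < a} = {b\<in>B. b < a} \<union> {b\<in>C. b < a}" by auto
    thus ?thesis using assms by (simp add: card_Un_disjoint disjoint_iff)
  qed
  thus ?thesis by (simp add: inv_count_def sum.distrib)
qed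

lemma inv_sign_Un_left:
  "finite A \<Longrightarrow> finite B \<Longrightarrow> A \<inter> B = {} \<Longrightarrow> inv_sign (A \<union> B) C = inv_sign A C * inv_sign B C"
  by (simp add: inv_sign_def inv_count_Un_left power_add)

lemma inv_sign_Un_right:
  "finite B \<Longrightarrow> finite C \<Longrightarrow> B \<inter> C = {} \<Longrightarrow> inv_sign A (B \<union> C) = inv_sign A B * inv_sign A C"
  by (simp add: inv_sign_def inv_count_Un_right power_add)

lemma inv_sign_empty_left [simp]: "inv_sign {} B = 1"
  by (simp add: inv_sign_def inv_count_def)

lemma inv_sign_empty_right [simp]: "inv_sign A {} = 1"
  by (simp add: inv_sign_def inv_count_def)

lemma inv_count_swap:
  assumes "finite A" "finite B" "A \<inter> B = {}"
  shows "inv_count A B + inv_count B A = card A * card B"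
proof -
  have swap: "(\<Sum>b\<in>B. card {a\<in>A. a < b}) = (\<Sum>a\<in>A. card {b\<in>B. a < b})"
  proof -
    have "(\<Sum>b\<in>B. card {a\<in>A. a < b}) = (\<Sum>b\<in>B. \<Sum>a\<in>A. if a < b then 1 else 0)"
      using assms by (simp add: sum.If_cases Int_def)
    also have "\<dots> = (\<Sum>a\<in>A. \<Sum>b\<in>B. if a < b then 1 else 0)" by (rule sum.swap)
    also have "\<dots> = (\<Sum>a\<in>A. card {b\<in>B. a < b})"
      using assms by (simp add: sum.If_cases Int_def)
    finally show ?thesis .
  qed
  have "card {b\<in>B. b < a} + card {b\<in>B. a < b} = card B" if "a \<in> A" for a
  proof -
    have "B = {b\<in>B. b < a} \<union> {b\<in>B. a < b}" using assms that by auto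
    hence "card B = card ({b\<in>B. b < a} \<union> {b\<in>B. a < b})" by simp
    also have "\<dots> = card {b\<in>B. b < a} + card {b\<in>B. a < b}"
      using assms by (intro card_Un_disjoint) auto
    finally show ?thesis by simp
  qed
  hence "inv_count A B + (\<Sum>a\<in>A. card {b\<in>B. a < b}) = card A * card B"
    by (simp add: inv_count_def sum.distrib[symmetric])
  thus ?thesis using swap by (simp add: inv_count_def)
qed

lemma inv_sign_commute:
  assumes "finite A" "finite B" "A \<inter> B = {}" "even (card A * card B)"
  shows "inv_sign B A = inv_sign A B"
proof -
  have "even (inv_count A B + inv_count B A)"
    using inv_count_swap[OF assms(1-3)] assms(4) by simp
  thus ?thesis
    by (cases "even (inv_count A B)") (auto simp: inv_sign_def neg_one_even_power neg_one_odd_power)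
qed

fun shuffle_sign :: "'a::linorder set list \<Rightarrow> int" where
  "shuffle_sign [] = 1"
| "shuffle_sign (A # P) = inv_sign A (\<Union>(set P)) * shuffle_sign P"

lemma shuffle_sign_append:
  assumes "disjoint_list (xs @ ys)" "\<forall>A\<in>set (xs @ ys). finite A"
  shows "shuffle_sign (xs @ ys) = shuffle_sign xs * shuffle_sign ys * inv_sign (\<Union>(set xs)) (\<Union>(set ys))"
  using assms
proof (induction xs)
  case (Cons A xs)
  have fin: "finite (\<Union>(set xs))" "finite (\<Union>(set ys))" "finite A" using Cons.prems by auto
  have d: "A \<inter> \<Union>(set xs) = {}" "A \<inter> \<Union>(set ys) = {}" "\<Union>(set xs) \<inter> \<Union>(set ys) = {}"
    using Cons.prems(1) by (auto simp: disjoint_list_Cons disjoint_list_append)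
  have "shuffle_sign ((A # xs) @ ys) = inv_sign A (\<Union>(set xs) \<union> \<Union>(set ys)) * shuffle_sign (xs @ ys)"
    by simp
  also have "\<dots> = inv_sign A (\<Union>(set xs)) * inv_sign A (\<Union>(set ys)) *
      (shuffle_sign xs * shuffle_sign ys * inv_sign (\<Union>(set xs)) (\<Union>(set ys)))"
    using Cons fin d by (simp add: inv_sign_Un_right disjoint_list_Cons)
  also have "\<dots> = shuffle_sign (A # xs) * shuffle_sign ys * inv_sign (\<Union>(set (A # xs))) (\<Union>(set ys))"
    using fin d by (simp add: inv_sign_Un_left)
  finally show ?case .
qed simp

text \<open>A block of even cardinality commutes with everything, so only the relative order of the
  odd blocks matters.\<close>

lemma shuffle_sign_move_front:
  assumes "disjoint_list (ys1 @ x # ys2)" "\<forall>A\<in>set (ys1 @ x # ys2). finite A"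
    and "even (card x * card (\<Union>(set ys1)))"
  shows "shuffle_sign (ys1 @ x # ys2) = shuffle_sign (x # ys1 @ ys2)"
proof -
  let ?Y1 = "\<Union>(set ys1)" and ?Y2 = "\<Union>(set ys2)"
  have d: "disjoint_list ys1" "disjoint_list ys2" "x \<inter> ?Y2 = {}" "?Y1 \<inter> x = {}" "?Y1 \<inter> ?Y2 = {}"
    using assms(1) by (auto simp: disjoint_list_append disjoint_list_Cons)
  have f: "finite x" "finite ?Y1" "finite ?Y2" using assms(2) by auto
  have "shuffle_sign (ys1 @ x # ys2) = shuffle_sign ys1 * shuffle_sign (x # ys2) * inv_sign ?Y1 (x \<union> ?Y2)"
    using shuffle_sign_append[OF assms(1,2)] by simp
  also have "\<dots> = inv_sign x ?Y1 * inv_sign x ?Y2 * (shuffle_sign ys1 * shuffle_sign ys2 * inv_sign ?Y1 ?Y2)"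
    using d f inv_sign_commute[of x ?Y1] assms(3) by (simp add: inv_sign_Un_right Int_commute)
  also have "\<dots> = shuffle_sign (x # ys1 @ ys2)"
    using d f assms shuffle_sign_append[of ys1 ys2]
    by (simp add: inv_sign_Un_right disjoint_list_append Int_Un_distrib)
  finally show ?thesis .
qed

lemma shuffle_sign_perm:
  assumes "distinct xs" "distinct ys" "set xs = set ys" "disjoint_list xs" "\<forall>A\<in>set xs. finite A"
    and "filter (\<lambda>A. odd (card A)) xs = filter (\<lambda>A. odd (card A)) ys"
  shows "shuffle_sign xs = shuffle_sign ys"
  using assms
proof (induction xs arbitrary: ys)
  case (Cons x xs)
  let ?odd = "filter (\<lambda>A. odd (card A))"
  obtain ys1 ys2 where ys: "ys = ys1 @ x # ys2" using Cons.prems(3) by (metis list.set_intros(1) split_list)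
  have dys: "disjoint_list ys" using Cons.prems disjoint_list_iff_pairwise by metis
  have fin: "\<forall>A\<in>set ys. finite A" using Cons.prems by auto
  have x_notin: "x \<notin> set ys1" using Cons.prems(2) ys by auto
  have no_odd_before: "?odd ys1 = []" if "odd (card x)"
  proof (rule ccontr)
    assume "?odd ys1 \<noteq> []"
    then obtain y r where yr: "?odd ys1 = y # r" by (cases "?odd ys1") auto
    hence "y \<in> set ys1" by (metis filter_is_subset list.set_intros(1) subsetD)
    moreover have "y = x" using Cons.prems(6) ys yr that by simp
    ultimately show False using x_notin by simp
  qed
  have "even (card x * card (\<Union>(set ys1)))"
  proof (cases "odd (card x)")
    case True
    hence "\<forall>A\<in>set ys1. even (card A)" using no_odd_before by (metis (mono_tags, lifting) filter_empty_conv)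
    moreover have "disjoint_list ys1" using dys ys by (simp add: disjoint_list_append)
    ultimately show ?thesis using even_card_Union_disjoint_list[of ys1] fin ys by auto
  qed simp
  hence "shuffle_sign ys = shuffle_sign (x # ys1 @ ys2)"
    using shuffle_sign_move_front[of ys1 x ys2] dys fin ys by simp
  moreover have "shuffle_sign xs = shuffle_sign (ys1 @ ys2)"
  proof (rule Cons.IH)
    show "set xs = set (ys1 @ ys2)" using Cons.prems(1,2,3) ys by auto
    show "?odd xs = ?odd (ys1 @ ys2)"
      using Cons.prems(6) ys no_odd_before by (cases "odd (card x)") simp_all
  qed (use Cons.prems ys in \<open>auto simp: disjoint_list_Cons\<close>)
  moreover have "\<Union>(set (ys1 @ ys2)) = \<Union>(set xs)"
    using Cons.prems(1,2,3) ys by auto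
  ultimately show ?case by simp
qed simp


section \<open>The sign of the shuffle permutation\<close>

definition perm_of_list :: "nat list \<Rightarrow> nat \<Rightarrow> nat" where
  "perm_of_list xs = (\<lambda>j. if 1 \<le> j \<and> j \<le> length xs then xs ! (j - 1) else j)"

fun list_inv :: "'a::linorder list \<Rightarrow> nat" where
  "list_inv [] = 0"
| "list_inv (x # xs) = length (filter (\<lambda>y. y < x) xs) + list_inv xs"

definition list_inv_between :: "'a::linorder list \<Rightarrow> 'a list \<Rightarrow> nat" where
  "list_inv_between xs ys = (\<Sum>x\<leftarrow>xs. length (filter (\<lambda>y. y < x) ys))"

lemma list_inv_append: "list_inv (xs @ ys) = list_inv xs + list_inv ys + list_inv_between xs ys"
  by (induction xs) (auto simp: list_inv_between_def)

lemma list_inv_sorted: "sorted xs \<Longrightarrow> list_inv xs = 0"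
  by (induction xs) (auto simp: filter_empty_conv)

lemma list_inv_swap:
  assumes "a < b"
  shows "list_inv (ys @ b # a # zs) = Suc (list_inv (ys @ a # b # zs))"
proof -
  have "list_inv_between ys (b # a # zs) = list_inv_between ys (a # b # zs)"
    unfolding list_inv_between_def by (induction ys) auto
  thus ?thesis using assms by (simp add: list_inv_append)
qed

lemma list_inv_snoc_greatest: "\<forall>y\<in>set ys. y < x \<Longrightarrow> list_inv (ys @ [x]) = list_inv ys"
proof -
  assume "\<forall>y\<in>set ys. y < x"
  hence "list_inv_between ys [x] = 0" unfolding list_inv_between_def by (induction ys) auto
  thus ?thesis by (simp add: list_inv_append)
qed

lemma list_inv_between_eq_inv_count:
  assumes "distinct xs" "distinct ys"
  shows "list_inv_between xs ys = inv_count (set xs) (set ys)"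
proof -
  have "list_inv_between xs ys = (\<Sum>x\<in>set xs. length (filter (\<lambda>y. y < x) ys))"
    unfolding list_inv_between_def using assms by (simp add: sum_list_distinct_conv_sum_set)
  also have "\<dots> = (\<Sum>x\<in>set xs. card {y\<in>set ys. y < x})"
    using assms by (intro sum.cong) (auto simp: distinct_length_filter Int_def conj_commute)
  finally show ?thesis by (simp add: inv_count_def)
qed

lemma perm_of_list_permutes:
  assumes "distinct xs" "set xs = {1..length xs}"
  shows "perm_of_list xs permutes {1..length xs}"
proof (rule bij_imp_permutes)
  have "bij_betw (\<lambda>j. j - 1) {1..length xs} {..<length xs}"
    by (rule bij_betw_byWitness[where f'="\<lambda>j. j + 1"]) auto
  moreover have "bij_betw ((!) xs) {..<length xs} {1..length xs}"
    using bij_betw_nth[OF assms(1)] assms(2) by simp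
  ultimately have "bij_betw ((!) xs \<circ> (\<lambda>j. j - 1)) {1..length xs} {1..length xs}"
    by (rule bij_betw_trans)
  thus "bij_betw (perm_of_list xs) {1..length xs} {1..length xs}"
    by (rule bij_betw_cong[THEN iffD1, rotated]) (auto simp: perm_of_list_def)
qed (auto simp: perm_of_list_def)

lemma perm_of_list_swap:
  "perm_of_list (ys @ b # a # zs) =
     perm_of_list (ys @ a # b # zs) \<circ> Transposition.transpose (length ys + 1) (length ys + 2)"
proof (rule ext)
  fix j
  show "perm_of_list (ys @ b # a # zs) j =
      (perm_of_list (ys @ a # b # zs) \<circ> Transposition.transpose (length ys + 1) (length ys + 2)) j"
  proof (cases "j = length ys + 1 \<or> j = length ys + 2")
    case True
    thus ?thesis by (auto simp: perm_of_list_def nth_append)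
  next
    case False
    have "(ys @ b # a # zs) ! (j - 1) = (ys @ a # b # zs) ! (j - 1)" if "j \<ge> 1"
    proof (cases "j - 1 < length ys")
      case False
      hence "j - 1 - length ys \<ge> 2" using \<open>\<not> (j = length ys + 1 \<or> j = length ys + 2)\<close> that by auto
      then obtain k where "j - 1 - length ys = Suc (Suc k)" by (metis add_2_eq_Suc le_Suc_ex)
      thus ?thesis using False by (simp add: nth_append)
    qed (simp add: nth_append)
    thus ?thesis using False by (auto simp: perm_of_list_def transpose_def)
  qed
qed

lemma sign_perm_of_list_swap:
  assumes "distinct (ys @ a # b # zs)" "set (ys @ a # b # zs) = {1..length (ys @ a # b # zs)}"
  shows "sign (perm_of_list (ys @ b # a # zs)) = - sign (perm_of_list (ys @ a # b # zs))"
proof -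
  let ?t = "Transposition.transpose (length ys + 1) (length ys + 2)"
  have "permutation (perm_of_list (ys @ a # b # zs))"
    by (rule permutes_imp_permutation[OF finite_atLeastAtMost perm_of_list_permutes[OF assms]])
  hence "sign (perm_of_list (ys @ a # b # zs) \<circ> ?t) = sign (perm_of_list (ys @ a # b # zs)) * sign ?t"
    using permutation_swap_id by (rule sign_compose)
  thus ?thesis unfolding perm_of_list_swap[where a = a and b = b] by (simp add: sign_swap_id)
qed

lemma sign_perm_of_list:
  "distinct xs \<Longrightarrow> set xs = {1..length xs} \<Longrightarrow> sign (perm_of_list xs) = (-1) ^ list_inv xs"
proof (induction "length xs" arbitrary: xs)
  case 0
  hence "perm_of_list xs = id" by (auto simp: perm_of_list_def)
  thus ?case using 0 by simp
next
  case (Suc m)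
  txt \<open>Move the largest entry to the end by adjacent transpositions.\<close>
  have max_to_end: "sign (perm_of_list (ys @ Suc m # zs)) = (-1) ^ list_inv (ys @ Suc m # zs)"
    if "length (ys @ Suc m # zs) = Suc m" "distinct (ys @ Suc m # zs)"
      "set (ys @ Suc m # zs) = {1..Suc m}" for ys zs
    using that
  proof (induction zs arbitrary: ys)
    case Nil
    have "insert (Suc m) (set ys) = {1..Suc m}" "Suc m \<notin> set ys" using Nil.prems(2,3) by simp_all
    hence "set ys = {1..Suc m} - {Suc m}" by blast
    also have "\<dots> = {1..m}" by auto
    finally have "set ys = {1..m}" .
    moreover have "perm_of_list (ys @ [Suc m]) = perm_of_list ys"
      using Nil.prems(1) by (intro ext) (auto simp: perm_of_list_def nth_append)
    moreover have "list_inv (ys @ [Suc m]) = list_inv ys"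
      using \<open>set ys = {1..m}\<close> by (intro list_inv_snoc_greatest) auto
    ultimately show ?case using Suc.hyps(1)[of ys] Nil.prems by simp
  next
    case (Cons z zs)
    have "z \<in> {1..Suc m}" "z \<noteq> Suc m" using Cons.prems(2,3) by auto
    hence "z < Suc m" by simp
    moreover have "sign (perm_of_list ((ys @ [z]) @ Suc m # zs)) = (-1) ^ list_inv ((ys @ [z]) @ Suc m # zs)"
      using Cons.IH[of "ys @ [z]"] Cons.prems by auto
    moreover have "distinct (ys @ z # Suc m # zs)" using Cons.prems(2) by auto
    moreover have "set (ys @ z # Suc m # zs) = {1..length (ys @ z # Suc m # zs)}" using Cons.prems by auto
    ultimately show ?case by (simp add: list_inv_swap sign_perm_of_list_swap)
  qed
  have "Suc m \<in> set xs" using Suc.prems Suc.hyps(2) by simp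
  then obtain ys zs where xs: "xs = ys @ Suc m # zs" by (meson split_list)
  thus ?case using max_to_end[of ys zs] Suc.prems Suc.hyps(2) by simp
qed

lemma concat_sorted_blocks:
  fixes P :: "'a::linorder set list"
  assumes "disjoint_list P" "\<forall>A\<in>set P. finite A"
  shows "distinct (concat (map sorted_list_of_set P))"
    and "set (concat (map sorted_list_of_set P)) = \<Union>(set P)"
    and "(-1) ^ list_inv (concat (map sorted_list_of_set P)) = shuffle_sign P"
  using assms
proof (induction P)
  case (Cons A P)
  let ?xs = "concat (map sorted_list_of_set P)"
  { case 1 thus ?case using Cons by (auto simp: disjoint_list_Cons) }
  { case 2 thus ?case using Cons by auto }
  { case 3
    have "distinct ?xs" "set ?xs = \<Union>(set P)" using Cons 3 by (auto simp: disjoint_list_Cons)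
    hence "list_inv_between (sorted_list_of_set A) ?xs = inv_count A (\<Union>(set P))"
      using list_inv_between_eq_inv_count[of "sorted_list_of_set A"] 3 by simp
    thus ?case using Cons 3
      by (simp add: list_inv_append list_inv_sorted power_add inv_sign_def disjoint_list_Cons)
  }
qed auto

lemma eps_eq_shuffle_sign:
  assumes "P \<in> ord_partitions n"
  shows "eps P = shuffle_sign P"
proof -
  let ?xs = "concat (map sorted_list_of_set P)"
  have dl: "disjoint_list P" and un: "\<Union>(set P) = {1..n}"
    using assms by (simp_all add: ord_partitions_def disjoint_list_def)
  have fin: "\<forall>A\<in>set P. finite A" using un by (metis Sup_upper finite_atLeastAtMost finite_subset)
  have d: "distinct ?xs" and s: "set ?xs = {1..n}" and e: "(-1) ^ list_inv ?xs = shuffle_sign P"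
    using concat_sorted_blocks[OF dl fin] un by auto
  have l: "length ?xs = n" using distinct_card[OF d] s by simp
  have "sigma_inv P = perm_of_list ?xs" by (simp add: sigma_inv_def perm_of_list_def Let_def)
  moreover have "permutation (perm_of_list ?xs)"
    using permutes_imp_permutation[OF finite_atLeastAtMost perm_of_list_permutes[OF d]] s l by simp
  ultimately have "eps P = sign (perm_of_list ?xs)" by (simp add: eps_def sigma_def sign_inverse)
  thus ?thesis using sign_perm_of_list[OF d] s l e by simp
qed

section \<open>The block polynomial and its expansion into small blocks\<close>

definition tvar :: "int poly" where
  "tvar = [:0, 1:]"

definition tri_sign :: "nat \<Rightarrow> int poly" where
  "tri_sign k = (-1) ^ (k * (k - 1) div 2)"

definition block_poly :: "nat \<Rightarrow> int poly" where
  "block_poly k = tri_sign k * (if odd k then tvar else 1)"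

lemma tri_sign_Suc: "tri_sign (Suc k) = tri_sign k * (-1) ^ k"
proof -
  have "Suc k * (Suc k - 1) = k * (k - 1) + 2 * k" by (cases k) auto
  hence "Suc k * (Suc k - 1) div 2 = k * (k - 1) div 2 + k" by simp
  thus ?thesis by (simp add: tri_sign_def power_add)
qed

lemma block_poly_Suc_add:
  "block_poly (Suc (p + q)) = tvar * (-1) ^ q * block_poly (p + q) + block_poly (p + q - 1) *
     (of_int (if odd p then 1 else 0) * (-1 - tvar^2) + of_int (if odd q then 1 else 0) * (-1 + tvar^2))"
proof (cases "p + q")
  case 0
  thus ?thesis by (simp add: block_poly_def tri_sign_def)
next
  case (Suc j)
  have "tri_sign (Suc j) = tri_sign j * (-1) ^ j" by (rule tri_sign_Suc)
  moreover have "tri_sign (Suc (Suc j)) = - tri_sign j"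
    by (simp add: tri_sign_Suc power_add[symmetric] mult.assoc)
  moreover have "odd j \<longleftrightarrow> (odd p \<longleftrightarrow> odd q)" using Suc by presburger
  ultimately show ?thesis using Suc
    by (cases "odd p"; cases "odd q")
      (auto simp: block_poly_def algebra_simps power2_eq_square neg_one_odd_power neg_one_even_power)
qed

lemma sum_neg_one_power_card_greater:
  fixes K :: "'a::linorder set"
  assumes "finite K"
  shows "(\<Sum>z\<in>K. (-1::int) ^ card {a\<in>K. z < a}) = (if odd (card K) then 1 else 0)"
  using assms
proof (induction "card K" arbitrary: K)
  case (Suc k)
  let ?m = "Min K"
  let ?K' = "K - {?m}"
  have mK: "?m \<in> K" using Suc by (metis Min_in card_0_eq nat.distinct(1))
  have ck: "card ?K' = k" using Suc.hyps(2) mK Suc.prems by simp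
  have "{a\<in>K. z < a} = {a\<in>?K'. z < a}" if "z \<in> ?K'" for z
  proof -
    have "?m \<le> z" using that Suc.prems by simp
    thus ?thesis by auto
  qed
  hence "(\<Sum>z\<in>?K'. (-1::int) ^ card {a\<in>K. z < a}) = (\<Sum>z\<in>?K'. (-1::int) ^ card {a\<in>?K'. z < a})"
    by (intro sum.cong) auto
  also have "\<dots> = (if odd k then 1 else 0)" using Suc.hyps(1)[of ?K'] ck Suc.prems by simp
  finally have sum: "(\<Sum>z\<in>K. (-1::int) ^ card {a\<in>K. z < a}) =
      (-1) ^ card {a\<in>K. ?m < a} + (if odd k then 1 else 0)"
    using Suc.prems mK by (simp add: sum.remove)
  have "{a\<in>K. ?m < a} = ?K'"
    using Suc.prems by (auto simp: order.not_eq_order_implies_strict)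
  hence "card {a\<in>K. ?m < a} = k" using ck by simp
  thus ?case unfolding sum Suc.hyps(2)[symmetric]
    by (cases "even k") (simp_all add: neg_one_even_power neg_one_odd_power)
qed simp

lemma inv_count_singleton: "finite A \<Longrightarrow> inv_count A {x} = card {a\<in>A. x < a}"
proof -
  have "card {b\<in>{x}. b < a} = (if x < a then 1 else 0)" for a
  proof -
    have "{b\<in>{x}. b < a} = (if x < a then {x} else {})" by auto
    thus ?thesis by simp
  qed
  thus "finite A \<Longrightarrow> ?thesis" by (simp add: inv_count_def sum.If_cases Int_def)
qed

lemma inv_count_doubleton:
  assumes "finite A" "z \<noteq> x"
  shows "inv_count A {z, x} = card {a\<in>A. z < a} + card {a\<in>A. x < a}"
proof -
  have "card {b\<in>{z, x}. b < a} = (if z < a then 1 else 0) + (if x < a then 1 else 0)" for a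
  proof -
    have "{b\<in>{z, x}. b < a} = (if z < a then {z} else {}) \<union> (if x < a then {x} else {})" by auto
    thus ?thesis using assms(2) by (cases "z < a"; cases "x < a") auto
  qed
  thus ?thesis using assms(1) by (simp add: inv_count_def sum.distrib sum.If_cases Int_def)
qed

lemma sum_inv_sign_pairs_below:
  fixes J :: "'a::linorder set"
  assumes "finite J" "x \<notin> J"
  shows "(\<Sum>z\<in>{a\<in>J. a < x}. inv_sign (J - {z}) {z, x}) = (if odd (card {a\<in>J. a < x}) then 1 else 0)"
proof -
  let ?Lo = "{a\<in>J. a < x}" and ?Hi = "{a\<in>J. x < a}"
  have "inv_sign (J - {z}) {z, x} = (-1) ^ card {a\<in>?Lo. z < a}" if z: "z \<in> ?Lo" for z
  proof -
    have "{a\<in>J - {z}. z < a} = {a\<in>?Lo. z < a} \<union> ?Hi" "{a\<in>J - {z}. x < a} = ?Hi"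
      using z assms(2) by (auto simp: linorder_neq_iff) (metis linorder_neqE)
    moreover have "card ({a\<in>?Lo. z < a} \<union> ?Hi) = card {a\<in>?Lo. z < a} + card ?Hi"
      using assms(1) by (intro card_Un_disjoint) auto
    moreover have "z \<noteq> x" using z by auto
    ultimately have "inv_count (J - {z}) {z, x} = card {a\<in>?Lo. z < a} + 2 * card ?Hi"
      using inv_count_doubleton[of "J - {z}" z x] assms(1) z by simp
    thus ?thesis by (simp add: inv_sign_def power_add power_mult)
  qed
  hence "(\<Sum>z\<in>?Lo. inv_sign (J - {z}) {z, x}) = (\<Sum>z\<in>?Lo. (-1) ^ card {a\<in>?Lo. z < a})"
    by (rule sum.cong[OF refl])
  thus ?thesis using sum_neg_one_power_card_greater[of ?Lo] assms(1) by simp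
qed

lemma sum_inv_sign_pairs_above:
  fixes J :: "'a::linorder set"
  assumes "finite J"
  shows "(\<Sum>z\<in>{a\<in>J. x < a}. inv_sign (J - {z}) {z, x}) = (if odd (card {a\<in>J. x < a}) then 1 else 0)"
proof -
  let ?Hi = "{a\<in>J. x < a}"
  have "inv_sign (J - {z}) {z, x} = (-1) ^ (card ?Hi - 1) * (-1) ^ card {a\<in>?Hi. z < a}"
    if z: "z \<in> ?Hi" for z
  proof -
    have "{a\<in>J - {z}. z < a} = {a\<in>?Hi. z < a}" "{a\<in>J - {z}. x < a} = ?Hi - {z}"
      using z by auto
    moreover have "z \<noteq> x" using z by auto
    ultimately have "inv_count (J - {z}) {z, x} = card {a\<in>?Hi. z < a} + (card ?Hi - 1)"
      using inv_count_doubleton[of "J - {z}" z x] assms z by simp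
    thus ?thesis by (simp add: inv_sign_def power_add)
  qed
  hence "(\<Sum>z\<in>?Hi. inv_sign (J - {z}) {z, x}) = (-1) ^ (card ?Hi - 1) * (\<Sum>z\<in>?Hi. (-1) ^ card {a\<in>?Hi. z < a})"
    by (simp add: sum_distrib_left)
  thus ?thesis using sum_neg_one_power_card_greater[of ?Hi] assms
    by (cases "odd (card ?Hi)") (auto simp: neg_one_even_power)
qed

definition pair_weight :: "('a::linorder \<Rightarrow> nat) \<Rightarrow> 'a set \<Rightarrow> int poly" where
  "pair_weight r A = (if r (Min A) < r (Max A) then -1 - tvar^2 else -1 + tvar^2)"

text \<open>The recursion peeling off the block that contains the element \<open>x\<close> of largest rank:
  either \<open>{x}\<close> alone (weight \<open>t\<close>) or a pair \<open>{z, x}\<close>.\<close>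

lemma block_poly_Suc_expansion:
  fixes J :: "'a::linorder set"
  assumes J: "finite J" "x \<notin> J" and r: "\<forall>z\<in>J. r z < r x"
  shows "tvar * of_int (inv_sign J {x}) * block_poly (card J) +
      (\<Sum>z\<in>J. pair_weight r {z, x} * of_int (inv_sign (J - {z}) {z, x}) * block_poly (card J - 1))
    = block_poly (Suc (card J))"
proof -
  let ?Lo = "{a\<in>J. a < x}" and ?Hi = "{a\<in>J. x < a}"
  let ?f = "\<lambda>z. pair_weight r {z, x} * of_int (inv_sign (J - {z}) {z, x}) * block_poly (card J - 1)"
  have split: "J = ?Lo \<union> ?Hi" "?Lo \<inter> ?Hi = {}" using J(2) by (auto simp: linorder_neq_iff) (metis linorder_neqE)
  hence card_J: "card J = card ?Lo + card ?Hi" using J(1) by (metis (no_types, lifting) card_Un_disjoint finite_Un)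
  have "(\<Sum>z\<in>?Lo. ?f z) = (-1 - tvar^2) * block_poly (card J - 1) * of_int (\<Sum>z\<in>?Lo. inv_sign (J - {z}) {z, x})"
    using r by (simp add: pair_weight_def sum_distrib_left of_int_sum mult_ac)
  also have "\<dots> = (-1 - tvar^2) * block_poly (card J - 1) * of_int (if odd (card ?Lo) then 1 else 0)"
    using sum_inv_sign_pairs_below[OF J] by simp
  finally have Lo: "(\<Sum>z\<in>?Lo. ?f z) = \<dots>" .
  have "pair_weight r {z, x} = -1 + tvar^2" if "z \<in> ?Hi" for z
    using that r by (auto simp: pair_weight_def)
  hence "(\<Sum>z\<in>?Hi. ?f z) = (\<Sum>z\<in>?Hi. (-1 + tvar^2) * of_int (inv_sign (J - {z}) {z, x}) * block_poly (card J - 1))"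
    by (intro sum.cong) auto
  also have "\<dots> = (-1 + tvar^2) * block_poly (card J - 1) * of_int (\<Sum>z\<in>?Hi. inv_sign (J - {z}) {z, x})"
    by (simp add: sum_distrib_left of_int_sum mult_ac)
  also have "\<dots> = (-1 + tvar^2) * block_poly (card J - 1) * of_int (if odd (card ?Hi) then 1 else 0)"
    using sum_inv_sign_pairs_above[OF J(1)] by simp
  finally have Hi: "(\<Sum>z\<in>?Hi. ?f z) = \<dots>" .
  have "(\<Sum>z\<in>J. ?f z) = (\<Sum>z\<in>?Lo. ?f z) + (\<Sum>z\<in>?Hi. ?f z)"
    using split J(1) by (metis (no_types, lifting) finite_Un sum.union_disjoint)
  also have "\<dots> = block_poly (card J - 1) * (of_int (if odd (card ?Lo) then 1 else 0) * (-1 - tvar^2)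
      + of_int (if odd (card ?Hi) then 1 else 0) * (-1 + tvar^2))"
    unfolding Lo Hi by (simp add: algebra_simps)
  finally have S: "(\<Sum>z\<in>J. ?f z) = \<dots>" .
  have R: "block_poly (Suc (card J)) = tvar * (-1) ^ card ?Hi * block_poly (card J) + block_poly (card J - 1) *
      (of_int (if odd (card ?Lo) then 1 else 0) * (-1 - tvar^2) +
       of_int (if odd (card ?Hi) then 1 else 0) * (-1 + tvar^2))"
    using block_poly_Suc_add[of "card ?Lo" "card ?Hi"] by (simp only: card_J)
  have "inv_sign J {x} = (-1) ^ card ?Hi" using inv_count_singleton[OF J(1)] by (simp add: inv_sign_def)
  thus ?thesis unfolding R S by simp
qed

definition small_block :: "'a set \<Rightarrow> bool" where
  "small_block A \<longleftrightarrow> finite A \<and> (card A = 1 \<or> card A = 2)"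

definition small_partitions :: "'a set \<Rightarrow> 'a set list set" where
  "small_partitions S = {s. (\<forall>A\<in>set s. small_block A) \<and> disjoint_list s \<and> \<Union>(set s) = S}"

definition sorted_small_partitions :: "('a set \<Rightarrow> 'k::linorder) \<Rightarrow> 'a set \<Rightarrow> 'a set list set" where
  "sorted_small_partitions key S = {s \<in> small_partitions S. sorted_wrt (\<lambda>A B. key A < key B) s}"

definition small_weight :: "('a::linorder \<Rightarrow> nat) \<Rightarrow> 'a set \<Rightarrow> int poly" where
  "small_weight r A = (if card A = 1 then tvar else pair_weight r A)"

definition small_weight_list :: "('a::linorder \<Rightarrow> nat) \<Rightarrow> 'a set list \<Rightarrow> int poly" where
  "small_weight_list r s = prod_list (map (small_weight r) s)"

lemma small_block_nonempty: "small_block A \<Longrightarrow> A \<noteq> {}"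
  by (auto simp: small_block_def)

lemma small_block_finite: "small_block A \<Longrightarrow> finite A"
  by (auto simp: small_block_def)

lemma small_weight_list_simps [simp]:
  "small_weight_list r [] = 1"
  "small_weight_list r (A # xs) = small_weight r A * small_weight_list r xs"
  "small_weight_list r (xs @ ys) = small_weight_list r xs * small_weight_list r ys"
  by (simp_all add: small_weight_list_def)

lemma small_weight_list_mset: "mset xs = mset ys \<Longrightarrow> small_weight_list r xs = small_weight_list r ys"
  unfolding small_weight_list_def by (metis mset_map prod_mset_prod_list)

lemma small_partitionsD:
  "g \<in> small_partitions I \<Longrightarrow> distinct g \<and> set g \<subseteq> {A. small_block A \<and> A \<subseteq> I} \<and> disjoint_list g"
  unfolding small_partitions_def using disjoint_list_distinct small_block_nonempty by blast

lemma finite_small_partitions: "finite S \<Longrightarrow> finite (small_partitions S)"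
proof -
  assume f: "finite S"
  have "small_partitions S \<subseteq> {s. set s \<subseteq> Pow S \<and> length s \<le> card S}"
  proof
    fix s assume "s \<in> small_partitions S"
    hence s: "\<forall>A\<in>set s. small_block A" "disjoint_list s" "\<Union>(set s) = S"
      by (auto simp: small_partitions_def)
    have "length s \<le> card (\<Union>(set s))"
      using length_le_card_Union_disjoint_list[OF s(2)] s(1) small_block_nonempty small_block_finite by blast
    thus "s \<in> {s. set s \<subseteq> Pow S \<and> length s \<le> card S}" using s(3) by auto
  qed
  moreover have "finite {s. set s \<subseteq> Pow S \<and> length s \<le> card S}"
    using f by (intro finite_lists_length_le) auto
  ultimately show ?thesis by (rule finite_subset)
qed

lemma finite_sorted_small_partitions: "finite S \<Longrightarrow> finite (sorted_small_partitions key S)"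
  by (rule finite_subset[OF _ finite_small_partitions]) (auto simp: sorted_small_partitions_def)

lemma small_partitions_empty [simp]: "small_partitions {} = {[]}"
proof -
  have "s = []" if "s \<in> small_partitions {}" for s
    using that small_block_nonempty by (cases s) (auto simp: small_partitions_def)
  thus ?thesis by (auto simp: small_partitions_def)
qed

lemma sorted_small_partitions_empty [simp]: "sorted_small_partitions key {} = {[]}"
  by (auto simp: sorted_small_partitions_def)

lemma sum_small_blocks_containing:
  assumes "finite I" "x \<in> I"
  shows "(\<Sum>B\<in>{B. small_block B \<and> x \<in> B \<and> B \<subseteq> I}. f B) = f {x} + (\<Sum>z\<in>I - {x}. f {z, x})"
proof -
  have "{B. small_block B \<and> x \<in> B \<and> B \<subseteq> I} = insert {x} ((\<lambda>z. {z, x}) ` (I - {x}))"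
  proof (intro set_eqI iffI)
    fix B assume "B \<in> {B. small_block B \<and> x \<in> B \<and> B \<subseteq> I}"
    hence B: "finite B" "card B = 1 \<or> card B = 2" "x \<in> B" "B \<subseteq> I" by (auto simp: small_block_def)
    show "B \<in> insert {x} ((\<lambda>z. {z, x}) ` (I - {x}))"
    proof (cases "card B = 1")
      case True
      thus ?thesis using B by (auto simp: card_Suc_eq)
    next
      case False
      then obtain b c where "B = {b, c}" "b \<noteq> c" using B by (auto simp: card_2_iff)
      thus ?thesis using B by (cases "b = x") (auto simp: insert_commute)
    qed
  qed (use assms in \<open>auto simp: small_block_def\<close>)
  moreover have "inj_on (\<lambda>z. {z, x}) (I - {x})" by (auto simp: inj_on_def doubleton_eq_iff)
  moreover have "{x} \<notin> (\<lambda>z. {z, x}) ` (I - {x})" by auto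
  ultimately show ?thesis using assms(1) by (simp add: sum.reindex)
qed

definition rank_key :: "('a \<Rightarrow> nat) \<Rightarrow> nat \<Rightarrow> 'a set \<Rightarrow> nat \<times> nat" where
  "rank_key r M A = (Max (r ` A), if card A = 1 then M else Min (r ` A))"

lemma Max_image_less:
  assumes "inj_on r I" "\<forall>y\<in>I. r y \<le> r x" "x \<in> I" "C \<subseteq> I" "finite C" "C \<noteq> {}" "x \<notin> C"
  shows "Max (r ` C) < r x"
proof -
  have "Max (r ` C) \<in> r ` C" using assms(5,6) by simp
  then obtain c where c: "c \<in> C" "Max (r ` C) = r c" by auto
  hence "r c \<noteq> r x" using assms by (metis inj_on_contraD subsetD)
  thus ?thesis using c assms(2,4) by (simp add: order.not_eq_order_implies_strict subset_iff)
qed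

lemma Max_image_eq:
  assumes "\<forall>y\<in>I. r y \<le> r x" "C \<subseteq> I" "finite C" "x \<in> C"
  shows "Max (r ` C) = r x"
proof (rule antisym)
  show "Max (r ` C) \<le> r x" using assms by (subst Max_le_iff) auto
  show "r x \<le> Max (r ` C)" using assms by simp
qed

text \<open>Sorting by largest rank forces the block containing the element of largest rank to come last.\<close>

lemma sorted_small_partitions_rank_key:
  assumes inj: "inj_on r I" and xI: "x \<in> I" and mx: "\<forall>y\<in>I. r y \<le> r x"
  shows "sorted_small_partitions (rank_key r M) I =
    (\<lambda>(B, g). g @ [B]) ` (SIGMA B:{B. small_block B \<and> x \<in> B \<and> B \<subseteq> I}.
      sorted_small_partitions (rank_key r M) (I - B))"
proof (intro set_eqI iffI)
  let ?less = "\<lambda>A B. rank_key r M A < rank_key r M B"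
  fix g assume g: "g \<in> sorted_small_partitions (rank_key r M) I"
  hence ga: "\<forall>A\<in>set g. small_block A" "disjoint_list g" "\<Union>(set g) = I" "sorted_wrt ?less g"
    by (auto simp: sorted_small_partitions_def small_partitions_def)
  have "g \<noteq> []" using ga(3) xI by auto
  then obtain g' B where gg: "g = g' @ [B]" by (metis append_butlast_last_id)
  have dB: "disjoint_list g'" "\<Union>(set g') \<inter> B = {}"
    using ga(2) unfolding gg by (auto simp: disjoint_list_append disjoint_list_Cons)
  have B: "B \<subseteq> I" "small_block B" using ga gg by auto
  have srt: "sorted_wrt ?less g'" "\<forall>C\<in>set g'. ?less C B"
    using ga(4) unfolding gg by (auto simp: sorted_wrt_append)
  have "x \<in> B"
  proof (rule ccontr)
    assume nx: "x \<notin> B"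
    obtain C where C: "C \<in> set g'" "x \<in> C" using ga(3) xI gg nx by auto
    have "C \<subseteq> I" "small_block C" using C ga gg by auto
    hence "Max (r ` C) = r x" using Max_image_eq[OF mx] C small_block_finite by auto
    moreover have "Max (r ` B) < r x"
      using Max_image_less[OF inj mx xI B(1) small_block_finite[OF B(2)] small_block_nonempty[OF B(2)] nx] .
    ultimately show False using srt C by (auto simp: rank_key_def)
  qed
  moreover have "g' \<in> sorted_small_partitions (rank_key r M) (I - B)"
    using ga srt dB gg by (auto simp: sorted_small_partitions_def small_partitions_def)
  ultimately show "g \<in> (\<lambda>(B, g). g @ [B]) ` (SIGMA B:{B. small_block B \<and> x \<in> B \<and> B \<subseteq> I}.
      sorted_small_partitions (rank_key r M) (I - B))"
    using B gg by (auto intro!: image_eqI[of _ _ "(B, g')"])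
next
  let ?less = "\<lambda>A B. rank_key r M A < rank_key r M B"
  fix g assume "g \<in> (\<lambda>(B, g). g @ [B]) ` (SIGMA B:{B. small_block B \<and> x \<in> B \<and> B \<subseteq> I}.
      sorted_small_partitions (rank_key r M) (I - B))"
  then obtain B g' where gg: "g = g' @ [B]" and B: "small_block B" "x \<in> B" "B \<subseteq> I"
    and g': "g' \<in> sorted_small_partitions (rank_key r M) (I - B)" by auto
  have ga: "\<forall>A\<in>set g'. small_block A" "disjoint_list g'" "\<Union>(set g') = I - B" "sorted_wrt ?less g'"
    using g' by (auto simp: sorted_small_partitions_def small_partitions_def)
  have "?less C B" if "C \<in> set g'" for C
  proof -
    have sC: "small_block C" using that ga by auto
    have C: "C \<subseteq> I" "x \<notin> C" "finite C" "C \<noteq> {}"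
      using that ga B small_block_finite[OF sC] small_block_nonempty[OF sC] by auto
    have "Max (r ` C) < r x" using Max_image_less[OF inj mx xI C(1,3,4,2)] .
    moreover have "Max (r ` B) = r x" using Max_image_eq[OF mx B(3)] B small_block_finite by auto
    ultimately show ?thesis by (simp add: rank_key_def)
  qed
  thus "g \<in> sorted_small_partitions (rank_key r M) I"
    using ga B unfolding gg
    by (auto simp: sorted_small_partitions_def small_partitions_def disjoint_list_append
        disjoint_list_Cons sorted_wrt_append)
qed

lemma sum_sorted_small_partitions_rank_key:
  assumes "finite I" "inj_on r I" "x \<in> I" "\<forall>y\<in>I. r y \<le> r x"
  shows "(\<Sum>g\<in>sorted_small_partitions (rank_key r M) I. small_weight_list r g * of_int (shuffle_sign g)) =
    (\<Sum>B\<in>{B. small_block B \<and> x \<in> B \<and> B \<subseteq> I}. small_weight r B * of_int (inv_sign (I - B) B) *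
      (\<Sum>g\<in>sorted_small_partitions (rank_key r M) (I - B). small_weight_list r g * of_int (shuffle_sign g)))"
proof -
  let ?X = "{B. small_block B \<and> x \<in> B \<and> B \<subseteq> I}"
  let ?S = "\<lambda>J. sorted_small_partitions (rank_key r M) J"
  let ?F = "\<lambda>g. small_weight_list r g * of_int (shuffle_sign g)"
  have fin: "finite ?X" "\<And>B. finite (?S (I - B))"
    using assms(1) by (auto intro: finite_subset[of _ "Pow I"] finite_sorted_small_partitions)
  have snoc: "?F (g @ [B]) = small_weight r B * of_int (inv_sign (I - B) B) * ?F g"
    if "B \<in> ?X" "g \<in> ?S (I - B)" for B g
  proof -
    have g: "\<forall>A\<in>set g. small_block A" "disjoint_list g" "\<Union>(set g) = I - B"
      using that(2) by (auto simp: sorted_small_partitions_def small_partitions_def)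
    hence "shuffle_sign (g @ [B]) = shuffle_sign g * inv_sign (I - B) B"
      using shuffle_sign_append[of g "[B]"] that(1) small_block_finite
      by (auto simp: disjoint_list_append disjoint_list_Cons)
    thus ?thesis by (simp add: mult_ac)
  qed
  have "inj_on (\<lambda>(B, g). g @ [B]) (SIGMA B:?X. ?S (I - B))" by (auto simp: inj_on_def)
  hence "(\<Sum>g\<in>?S I. ?F g) = (\<Sum>(B, g)\<in>(SIGMA B:?X. ?S (I - B)). ?F (g @ [B]))"
    unfolding sorted_small_partitions_rank_key[OF assms(2-4)]
    by (subst sum.reindex) (simp_all add: case_prod_unfold)
  also have "\<dots> = (\<Sum>B\<in>?X. \<Sum>g\<in>?S (I - B). ?F (g @ [B]))"
    by (rule sum.Sigma[symmetric]) (use fin in auto)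
  also have "\<dots> = (\<Sum>B\<in>?X. \<Sum>g\<in>?S (I - B). small_weight r B * of_int (inv_sign (I - B) B) * ?F g)"
    by (intro sum.cong refl) (rule snoc)
  also have "\<dots> = (\<Sum>B\<in>?X. small_weight r B * of_int (inv_sign (I - B) B) * (\<Sum>g\<in>?S (I - B). ?F g))"
    by (simp add: sum_distrib_left)
  finally show ?thesis .
qed

lemma block_poly_rank_key_expansion:
  assumes "finite I" "inj_on r I"
  shows "block_poly (card I) =
    (\<Sum>g\<in>sorted_small_partitions (rank_key r M) I. small_weight_list r g * of_int (shuffle_sign g))"
  using assms
proof (induction "card I" arbitrary: I rule: less_induct)
  case less
  show ?case
  proof (cases "I = {}")
    case True
    thus ?thesis by (simp add: block_poly_def tri_sign_def)
  next
    case False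
    have "Max (r ` I) \<in> r ` I" using less.prems(1) False by simp
    then obtain x where xI: "x \<in> I" and xm: "r x = Max (r ` I)" by auto
    have mx: "\<forall>y\<in>I. r y \<le> r x" using less.prems(1) xm by auto
    have rx: "r z < r x" if "z \<in> I - {x}" for z
      using that mx less.prems(2) xI by (metis DiffE inj_on_contraD order.not_eq_order_implies_strict singletonI)
    let ?F = "\<lambda>g. small_weight_list r g * of_int (shuffle_sign g)"
    let ?J = "I - {x}"
    let ?pair = "\<lambda>z. pair_weight r {z, x} * of_int (inv_sign (?J - {z}) {z, x}) * block_poly (card ?J - 1)"
    have IH: "(\<Sum>g\<in>sorted_small_partitions (rank_key r M) (I - B). ?F g) = block_poly (card (I - B))"
      if "B \<in> {B. small_block B \<and> x \<in> B \<and> B \<subseteq> I}" for B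
    proof (rule less.hyps[symmetric])
      show "card (I - B) < card I" using that less.prems(1) by (intro psubset_card_mono) auto
      show "inj_on r (I - B)" using less.prems(2) by (rule inj_on_subset) auto
    qed (use less.prems(1) in auto)
    have "(\<Sum>g\<in>sorted_small_partitions (rank_key r M) I. ?F g) =
        (\<Sum>B\<in>{B. small_block B \<and> x \<in> B \<and> B \<subseteq> I}. small_weight r B * of_int (inv_sign (I - B) B) *
          (\<Sum>g\<in>sorted_small_partitions (rank_key r M) (I - B). ?F g))"
      by (rule sum_sorted_small_partitions_rank_key[OF less.prems xI mx])
    also have "\<dots> = (\<Sum>B\<in>{B. small_block B \<and> x \<in> B \<and> B \<subseteq> I}.
        small_weight r B * of_int (inv_sign (I - B) B) * block_poly (card (I - B)))"
      by (intro sum.cong refl) (simp add: IH)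
    also have "\<dots> = tvar * of_int (inv_sign ?J {x}) * block_poly (card ?J) + (\<Sum>z\<in>?J. ?pair z)"
    proof -
      have "small_weight r {z, x} * of_int (inv_sign (I - {z, x}) {z, x}) * block_poly (card (I - {z, x})) =
          ?pair z" if z: "z \<in> ?J" for z
      proof -
        have "I - {z, x} = ?J - {z}" by auto
        moreover have "card (?J - {z}) = card ?J - 1" using z less.prems(1) by simp
        ultimately show ?thesis using z by (simp add: small_weight_def)
      qed
      hence "(\<Sum>z\<in>?J. small_weight r {z, x} * of_int (inv_sign (I - {z, x}) {z, x}) * block_poly (card (I - {z, x})))
          = (\<Sum>z\<in>?J. ?pair z)" by (rule sum.cong[OF refl])
      thus ?thesis unfolding sum_small_blocks_containing[OF less.prems(1) xI]
        by (simp add: small_weight_def)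
    qed
    also have "\<dots> = block_poly (Suc (card ?J))"
      by (rule block_poly_Suc_expansion) (use less.prems(1) rx in auto)
    finally show ?thesis using card_Suc_Diff1[OF less.prems(1) xI] by simp
  qed
qed

lemma sorted_wrt_less_keyI:
  "inj_on k (set l) \<Longrightarrow> distinct l \<Longrightarrow> sorted (map k l) \<Longrightarrow> sorted_wrt (\<lambda>A B. k A < k B) l"
proof -
  assume "inj_on k (set l)" "distinct l" "sorted (map k l)"
  hence "sorted_wrt (<) (map k l)" by (simp add: strict_sorted_iff distinct_map)
  thus ?thesis by (simp add: sorted_wrt_map)
qed

lemma sorted_map_of_sorted_wrt_less: "sorted_wrt (\<lambda>A B. k A < k B) l \<Longrightarrow> sorted (map k l)"
proof -
  assume "sorted_wrt (\<lambda>A B. k A < k B) l"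
  hence "sorted_wrt (\<lambda>x y. k x \<le> k y) l"
    using sorted_wrt_mono_rel[of l "\<lambda>A B. k A < k B" "\<lambda>x y. k x \<le> k y"] by auto
  thus ?thesis by (simp add: sorted_map)
qed

lemma sort_key_in_sorted_small_partitions:
  assumes g: "g \<in> small_partitions I" and inj: "inj_on k {A. small_block A \<and> A \<subseteq> I}"
  shows "sort_key k g \<in> sorted_small_partitions k I"
proof -
  have g': "distinct g" "set g \<subseteq> {A. small_block A \<and> A \<subseteq> I}" "disjoint_list g"
    using small_partitionsD[OF g] by auto
  have "disjoint_list (sort_key k g)"
    using g' disjoint_list_iff_pairwise[OF g'(1)] disjoint_list_iff_pairwise[of "sort_key k g"] by simp
  moreover have "sorted_wrt (\<lambda>A B. k A < k B) (sort_key k g)"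
    using sorted_wrt_less_keyI[of k "sort_key k g"] inj_on_subset[OF inj g'(2)] g' by simp
  ultimately show ?thesis using g by (simp add: sorted_small_partitions_def small_partitions_def)
qed

lemma sort_key_sorted_small_partition:
  assumes "g \<in> sorted_small_partitions k I" "inj_on k {A. small_block A \<and> A \<subseteq> I}"
  shows "sort_key k g = g"
proof -
  have "set g \<subseteq> {A. small_block A \<and> A \<subseteq> I}" "sorted (map k g)"
    using assms(1) small_partitionsD sorted_map_of_sorted_wrt_less by (auto simp: sorted_small_partitions_def)
  thus ?thesis using sort_key_inj_key_eq[of g g k] inj_on_subset[OF assms(2)] by simp
qed

text \<open>Re-sorting by another key only permutes the blocks; if both keys order the singletons alike,
  the odd blocks keep their relative order and the sign is unchanged.\<close>

lemma shuffle_sign_sort_key: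
  fixes k1 :: "'a::linorder set \<Rightarrow> 'b::linorder" and k2 :: "'a set \<Rightarrow> 'c::linorder"
  assumes a: "a \<in> sorted_small_partitions k1 I"
    and inj1: "inj_on k1 {A. small_block A \<and> A \<subseteq> I}" and inj2: "inj_on k2 {A. small_block A \<and> A \<subseteq> I}"
    and sing: "\<And>A B. small_block A \<Longrightarrow> small_block B \<Longrightarrow> A \<subseteq> I \<Longrightarrow> B \<subseteq> I \<Longrightarrow>
       card A = 1 \<Longrightarrow> card B = 1 \<Longrightarrow> k1 A < k1 B \<longleftrightarrow> k2 A < k2 B"
  shows "shuffle_sign (sort_key k2 a) = shuffle_sign a"
proof -
  let ?odd = "filter (\<lambda>A. odd (card A))"
  have p: "distinct a" "set a \<subseteq> {A. small_block A \<and> A \<subseteq> I}" "disjoint_list a"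
    using a small_partitionsD by (auto simp: sorted_small_partitions_def)
  have odd_blocks: "set (?odd a) \<subseteq> {A. small_block A \<and> A \<subseteq> I \<and> card A = 1}"
    using p(2) by (auto simp: small_block_def)
  have "inj_on k2 (set (?odd a))" using inj_on_subset[OF inj2] odd_blocks by blast
  hence "sorted_wrt (\<lambda>A B. k2 A < k2 B) (sort_key k2 (?odd a))"
    using sorted_wrt_less_keyI[of k2 "sort_key k2 (?odd a)"] p(1) by simp
  hence "sorted_wrt (\<lambda>A B. k1 A < k1 B) (sort_key k2 (?odd a))"
  proof (rule sorted_wrt_mono_rel[rotated])
    fix A B assume "A \<in> set (sort_key k2 (?odd a))" "B \<in> set (sort_key k2 (?odd a))" "k2 A < k2 B"
    thus "k1 A < k1 B" using sing[of A B] odd_blocks by auto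
  qed
  hence "sorted (map k1 (sort_key k2 (?odd a)))" by (rule sorted_map_of_sorted_wrt_less)
  moreover have "inj_on k1 (set (?odd a))" using inj_on_subset[OF inj1] odd_blocks by blast
  ultimately have "sort_key k1 (?odd a) = sort_key k2 (?odd a)"
    using sort_key_inj_key_eq[of "?odd a" "sort_key k2 (?odd a)" k1] by simp
  hence "?odd (sort_key k2 a) = ?odd a"
    using sort_key_sorted_small_partition[OF a inj1] by (metis filter_sort)
  show ?thesis
  proof (rule shuffle_sign_perm)
    show "disjoint_list (sort_key k2 a)"
      using p disjoint_list_iff_pairwise[OF p(1)] disjoint_list_iff_pairwise[of "sort_key k2 a"] by simp
    show "\<forall>A\<in>set (sort_key k2 a). finite A" using p(2) small_block_finite by auto
  qed (use p \<open>?odd (sort_key k2 a) = ?odd a\<close> in simp_all)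
qed

lemma sum_sorted_small_partitions_key_change:
  fixes k1 :: "'a::linorder set \<Rightarrow> 'b::linorder" and k2 :: "'a set \<Rightarrow> 'c::linorder"
  assumes inj1: "inj_on k1 {A. small_block A \<and> A \<subseteq> I}" and inj2: "inj_on k2 {A. small_block A \<and> A \<subseteq> I}"
    and sing: "\<And>A B. small_block A \<Longrightarrow> small_block B \<Longrightarrow> A \<subseteq> I \<Longrightarrow> B \<subseteq> I \<Longrightarrow>
       card A = 1 \<Longrightarrow> card B = 1 \<Longrightarrow> k1 A < k1 B \<longleftrightarrow> k2 A < k2 B"
  shows "(\<Sum>g\<in>sorted_small_partitions k1 I. small_weight_list r g * of_int (shuffle_sign g)) =
    (\<Sum>g\<in>sorted_small_partitions k2 I. small_weight_list r g * of_int (shuffle_sign g))"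
proof (rule sum.reindex_bij_witness[where i="sort_key k1" and j="sort_key k2"])
  fix a assume a: "a \<in> sorted_small_partitions k1 I"
  hence a': "a \<in> small_partitions I" by (simp add: sorted_small_partitions_def)
  show "sort_key k2 a \<in> sorted_small_partitions k2 I"
    by (rule sort_key_in_sorted_small_partitions[OF a' inj2])
  have "sorted (map k1 a)" using a sorted_map_of_sorted_wrt_less by (auto simp: sorted_small_partitions_def)
  thus "sort_key k1 (sort_key k2 a) = a"
    using sort_key_inj_key_eq[of "sort_key k2 a" a k1] inj_on_subset[OF inj1] small_partitionsD[OF a'] by simp
  show "small_weight_list r (sort_key k2 a) * of_int (shuffle_sign (sort_key k2 a)) =
      small_weight_list r a * of_int (shuffle_sign a)"
    using shuffle_sign_sort_key[OF a inj1 inj2 sing] small_weight_list_mset[of "sort_key k2 a" a] by simp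
next
  fix b assume b: "b \<in> sorted_small_partitions k2 I"
  hence b': "b \<in> small_partitions I" by (simp add: sorted_small_partitions_def)
  show "sort_key k1 b \<in> sorted_small_partitions k1 I"
    by (rule sort_key_in_sorted_small_partitions[OF b' inj1])
  have "sorted (map k2 b)" using b sorted_map_of_sorted_wrt_less by (auto simp: sorted_small_partitions_def)
  thus "sort_key k2 (sort_key k1 b) = b"
    using sort_key_inj_key_eq[of "sort_key k1 b" b k2] inj_on_subset[OF inj2] small_partitionsD[OF b'] by simp
qed

definition slope_rank :: "('a::linorder \<Rightarrow> real) \<Rightarrow> 'a set \<Rightarrow> 'a \<Rightarrow> nat" where
  "slope_rank lam U i = card {j \<in> U. (- lam j, j) < (- lam i, i)}"

lemma slope_rank_less:
  assumes "finite U" "i \<in> U" "j \<in> U" "(- lam i, i) < (- lam j, j)"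
  shows "slope_rank lam U i < slope_rank lam U j"
proof -
  have "{k \<in> U. (- lam k, k) < (- lam i, i)} \<subset> {k \<in> U. (- lam k, k) < (- lam j, j)}"
  proof
    show "{k \<in> U. (- lam k, k) < (- lam i, i)} \<subseteq> {k \<in> U. (- lam k, k) < (- lam j, j)}"
      using assms(4) less_trans by blast
    have "i \<in> {k \<in> U. (- lam k, k) < (- lam j, j)}" using assms by simp
    thus "{k \<in> U. (- lam k, k) < (- lam i, i)} \<noteq> {k \<in> U. (- lam k, k) < (- lam j, j)}" by auto
  qed
  thus ?thesis unfolding slope_rank_def using assms(1) by (intro psubset_card_mono) auto
qed

lemma inj_on_slope_rank: "finite U \<Longrightarrow> inj_on (slope_rank lam U) U"
proof (rule inj_onI, rule ccontr)
  fix i j assume f: "finite U" and ij: "i \<in> U" "j \<in> U" "slope_rank lam U i = slope_rank lam U j" "i \<noteq> j"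
  hence "(- lam i, i) \<noteq> (- lam j, j)" by simp
  hence "(- lam i, i) < (- lam j, j) \<or> (- lam j, j) < (- lam i, i)" by (simp only: neq_iff)
  thus False
    using slope_rank_less[OF f ij(1,2), where lam = lam] slope_rank_less[OF f ij(2,1), where lam = lam] ij(3)
    by auto
qed

lemma slope_rank_less_card: "finite U \<Longrightarrow> i \<in> U \<Longrightarrow> slope_rank lam U i < card U"
  unfolding slope_rank_def by (rule psubset_card_mono) auto

lemma doubleton_eq_Min_Max: "finite (X::'a::linorder set) \<Longrightarrow> card X = 2 \<Longrightarrow> X = {Min X, Max X}"
proof -
  assume "finite X" "card X = 2"
  then obtain x y where "X = {x, y}" "x \<noteq> y" by (auto simp: card_2_iff)
  thus ?thesis by (cases "x < y") (auto simp: min_def max_def)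
qed

lemma inj_on_rank_key:
  assumes inj: "inj_on r U" and rM: "\<forall>i\<in>U. r i < M"
  shows "inj_on (rank_key r M) {A. small_block A \<and> A \<subseteq> U}"
proof (rule inj_onI)
  fix A B assume A: "A \<in> {A. small_block A \<and> A \<subseteq> U}" and B: "B \<in> {A. small_block A \<and> A \<subseteq> U}"
    and eq: "rank_key r M A = rank_key r M B"
  have fin: "finite A" "finite B" "A \<subseteq> U" "B \<subseteq> U" using A B small_block_finite by auto
  have card_r: "card (r ` A) = card A" "card (r ` B) = card B"
    using inj fin by (auto simp: card_image inj_on_subset)
  have Min_less: "Min (r ` C) < M" if "C \<subseteq> U" "finite C" "C \<noteq> {}" for C
  proof -
    have "Min (r ` C) \<in> r ` C" using that by simp
    then obtain c where "c \<in> C" "Min (r ` C) = r c" by auto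
    thus ?thesis using that rM by auto
  qed
  have "card A = 1 \<or> card A = 2" "card B = 1 \<or> card B = 2" "A \<noteq> {}" "B \<noteq> {}"
    using A B small_block_nonempty by (auto simp: small_block_def)
  hence cards: "card A = card B" using eq Min_less[of A] Min_less[of B] fin by (auto simp: rank_key_def)
  have "r ` A = r ` B"
  proof (cases "card A = 1")
    case True
    then obtain a b where "r ` A = {a}" "r ` B = {b}" using card_r cards by (metis card_1_singletonE)
    thus ?thesis using eq by (simp add: rank_key_def)
  next
    case False
    hence "card (r ` A) = 2" "card (r ` B) = 2" using A card_r cards by (auto simp: small_block_def)
    hence "r ` A = {Min (r ` A), Max (r ` A)}" "r ` B = {Min (r ` B), Max (r ` B)}"
      using doubleton_eq_Min_Max fin by auto
    moreover have "Max (r ` A) = Max (r ` B)" "Min (r ` A) = Min (r ` B)"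
      using eq False cards by (auto simp: rank_key_def)
    ultimately show ?thesis by simp
  qed
  thus "A = B" using inj fin by (simp add: inj_on_image_eq_iff)
qed

text \<open>The first component orders blocks by decreasing average of \<open>\<lambda>\<close>, which is what the
  cancellation argument needs; the second only makes the key injective on small blocks.\<close>

definition slope_key :: "(nat \<Rightarrow> real) \<Rightarrow> nat set \<Rightarrow> nat set \<Rightarrow> real \<times> (nat \<times> nat)" where
  "slope_key lam U A = (- (sJ lam A / real (card A)), rank_key (slope_rank lam U) (card U) A)"

lemma inj_on_slope_key:
  assumes "finite U"
  shows "inj_on (slope_key lam U) {A. small_block A \<and> A \<subseteq> U}"
proof -
  have "inj_on (rank_key (slope_rank lam U) (card U)) {A. small_block A \<and> A \<subseteq> U}"
    using inj_on_rank_key[OF inj_on_slope_rank[OF assms]] slope_rank_less_card[OF assms] by blast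
  thus ?thesis unfolding inj_on_def slope_key_def by auto
qed

lemma rank_key_less_iff_slope_key_less:
  assumes "finite U" "A \<subseteq> U" "card A = 1" "B \<subseteq> U" "card B = 1"
  shows "rank_key (slope_rank lam U) (card U) A < rank_key (slope_rank lam U) (card U) B \<longleftrightarrow>
    slope_key lam U A < slope_key lam U B"
proof -
  obtain a b where ab: "A = {a}" "B = {b}" using assms by (metis card_1_singletonE)
  hence "a \<in> U" "b \<in> U" using assms by auto
  have "slope_rank lam U a < slope_rank lam U b \<longleftrightarrow> (- lam a, a) < (- lam b, b)"
  proof
    assume r: "slope_rank lam U a < slope_rank lam U b"
    show "(- lam a, a) < (- lam b, b)"
    proof (rule ccontr)
      assume "\<not> (- lam a, a) < (- lam b, b)"
      hence "(- lam b, b) = (- lam a, a) \<or> (- lam b, b) < (- lam a, a)" unfolding not_less le_less by blast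
      thus False using r slope_rank_less[OF assms(1) \<open>b \<in> U\<close> \<open>a \<in> U\<close>, where lam = lam] by auto
    qed
  qed (rule slope_rank_less[OF assms(1) \<open>a \<in> U\<close> \<open>b \<in> U\<close>, where lam = lam])
  thus ?thesis using ab by (auto simp: slope_key_def rank_key_def sJ_def less_prod_def)
qed

lemma block_poly_slope_key_expansion:
  assumes "finite U" "I \<subseteq> U"
  shows "block_poly (card I) = (\<Sum>g\<in>sorted_small_partitions (slope_key lam U) I.
    small_weight_list (slope_rank lam U) g * of_int (shuffle_sign g))"
proof -
  have sub: "{A. small_block A \<and> A \<subseteq> I} \<subseteq> {A. small_block A \<and> A \<subseteq> U}" using assms(2) by auto
  have fI: "finite I" using assms finite_subset by blast
  have "inj_on (slope_rank lam U) I" using inj_on_slope_rank[OF assms(1)] assms(2) by (rule inj_on_subset)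
  hence "block_poly (card I) = (\<Sum>g\<in>sorted_small_partitions (rank_key (slope_rank lam U) (card U)) I.
      small_weight_list (slope_rank lam U) g * of_int (shuffle_sign g))"
    by (rule block_poly_rank_key_expansion[OF fI])
  also have "\<dots> = (\<Sum>g\<in>sorted_small_partitions (slope_key lam U) I.
      small_weight_list (slope_rank lam U) g * of_int (shuffle_sign g))"
  proof (rule sum_sorted_small_partitions_key_change)
    show "inj_on (rank_key (slope_rank lam U) (card U)) {A. small_block A \<and> A \<subseteq> I}"
      using inj_on_rank_key[OF inj_on_slope_rank[OF assms(1)]] slope_rank_less_card[OF assms(1)]
        inj_on_subset[OF _ sub] by blast
    show "inj_on (slope_key lam U) {A. small_block A \<and> A \<subseteq> I}"
      using inj_on_slope_key[OF assms(1)] inj_on_subset[OF _ sub] by blast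
    fix A B assume "A \<subseteq> I" "B \<subseteq> I" "card A = 1" "card B = 1"
    thus "rank_key (slope_rank lam U) (card U) A < rank_key (slope_rank lam U) (card U) B \<longleftrightarrow>
        slope_key lam U A < slope_key lam U B"
      using rank_key_less_iff_slope_key_less[OF assms(1)] assms(2) by blast
  qed
  finally show ?thesis .
qed

section \<open>Signed counts of cuts and their cancellation\<close>

lemma sorted_wrt_append_transp:
  "transp R \<Longrightarrow> xs \<noteq> [] \<Longrightarrow> ys \<noteq> [] \<Longrightarrow>
    sorted_wrt R (xs @ ys) \<longleftrightarrow> sorted_wrt R xs \<and> sorted_wrt R ys \<and> R (last xs) (hd ys)"
  by (metis successively_append_iff successively_conv_sorted_wrt)

lemma sorted_wrt_take_add:
  assumes "transp R" "1 \<le> u" "u < length s" "1 \<le> v"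
  shows "sorted_wrt R (take (u + v) s) \<longleftrightarrow>
    sorted_wrt R (take u s) \<and> R (s ! (u - 1)) (s ! u) \<and> sorted_wrt R (take v (drop u s))"
proof -
  have "take u s \<noteq> []" "take v (drop u s) \<noteq> []" using assms(2-4) by auto
  moreover have "last (take u s) = s ! (u - 1)"
    using assms(2,3) by (subst last_conv_nth) auto
  moreover have "hd (take v (drop u s)) = s ! u"
    using assms(3,4) by (auto simp: hd_drop_conv_nth)
  ultimately show ?thesis using sorted_wrt_append_transp[OF assms(1)] by (simp add: take_add conj_ac)
qed

text \<open>A signed count of the ways to cut \<open>s\<close> into nonempty consecutive runs, each sorted by \<open>R\<close>,
  such that every union of a prefix of runs together with \<open>W\<close> satisfies \<open>pos\<close>; each run
  contributes a factor \<open>-1\<close>.\<close>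

function cut_sum :: "('a set \<Rightarrow> 'a set \<Rightarrow> bool) \<Rightarrow> ('a set \<Rightarrow> bool) \<Rightarrow> 'a set \<Rightarrow> 'a set list \<Rightarrow> int" where
  "cut_sum R pos W [] = 1"
| "cut_sum R pos W (A # s) = (\<Sum>u\<in>{1..Suc (length s)}.
      if sorted_wrt R (take u (A # s)) \<and> pos (W \<union> \<Union>(set (take u (A # s))))
      then - cut_sum R pos (W \<union> \<Union>(set (take u (A # s)))) (drop u (A # s)) else 0)"
  by pat_completeness auto
termination by (relation "measure (\<lambda>(R, pos, W, s). length s)") auto

lemma cut_sum_nonempty:
  "s \<noteq> [] \<Longrightarrow> cut_sum R pos W s = (\<Sum>u\<in>{1..length s}.
      if sorted_wrt R (take u s) \<and> pos (W \<union> \<Union>(set (take u s)))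
      then - cut_sum R pos (W \<union> \<Union>(set (take u s))) (drop u s) else 0)"
  by (cases s) auto

text \<open>At such a position, cutting before \<open>s ! u\<close> and merging across it cancel each other.\<close>

definition cancel_point :: "('a set \<Rightarrow> 'a set \<Rightarrow> bool) \<Rightarrow> ('a set \<Rightarrow> bool) \<Rightarrow> 'a set \<Rightarrow> 'a set list \<Rightarrow> nat \<Rightarrow> bool" where
  "cancel_point R pos W s u \<longleftrightarrow>
    1 \<le> u \<and> u < length s \<and> (R (s ! (u - 1)) (s ! u) \<longleftrightarrow> pos (W \<union> \<Union>(set (take u s))))"

lemma Un_take_drop: "W \<union> \<Union>(set (take u s)) \<union> \<Union>(set (take v (drop u s))) = W \<union> \<Union>(set (take (u + v) s))"
  by (auto simp: take_add)

lemma cancel_point_drop: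
  assumes "cancel_point R pos W s w" "1 \<le> u" "u < w"
  shows "cancel_point R pos (W \<union> \<Union>(set (take u s))) (drop u s) (w - u)"
proof -
  have "drop u s ! (w - u - 1) = s ! (w - 1)" "drop u s ! (w - u) = s ! w"
    using assms by (auto simp: cancel_point_def)
  moreover have "W \<union> \<Union>(set (take u s)) \<union> \<Union>(set (take (w - u) (drop u s))) = W \<union> \<Union>(set (take w s))"
    using Un_take_drop[of W u s "w - u"] assms(3) by simp
  ultimately show ?thesis using assms unfolding cancel_point_def by auto
qed

lemma cut_sum_cancel_point:
  assumes "transp R"
  shows "cancel_point R pos W s w \<Longrightarrow> cut_sum R pos W s = 0"
proof (induction "length s" arbitrary: W s w rule: less_induct)
  case less
  define u0 where "u0 = (LEAST u. cancel_point R pos W s u)"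
  have cp: "cancel_point R pos W s u0"
    unfolding u0_def by (rule LeastI[where P = "cancel_point R pos W s", OF less.prems])
  have u0: "1 \<le> u0" "u0 < length s" using cp by (auto simp: cancel_point_def)
  define N where "N = length s"
  define W' where "W' = W \<union> \<Union>(set (take u0 s))"
  define s' where "s' = drop u0 s"
  define T where "T = (\<lambda>u. if sorted_wrt R (take u s) \<and> pos (W \<union> \<Union>(set (take u s)))
      then - cut_sum R pos (W \<union> \<Union>(set (take u s))) (drop u s) else 0)"
  have "cut_sum R pos W s = (\<Sum>u\<in>{1..N}. T u)"
    unfolding T_def N_def using u0 by (intro cut_sum_nonempty) auto
  also have "\<dots> = (\<Sum>u\<in>{1..<u0}. T u) + (T u0 + (\<Sum>u\<in>{u0<..N}. T u))"
  proof -
    have split: "{1..N} = {1..<u0} \<union> ({u0} \<union> {u0<..N})" using u0 by (auto simp: N_def)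
    show ?thesis unfolding split by (subst sum.union_disjoint) (auto simp: sum.union_disjoint)
  qed
  also have "(\<Sum>u\<in>{1..<u0}. T u) = 0"
  proof (intro sum.neutral ballI)
    txt \<open>Before the first cancel point, every remainder still contains one.\<close>
    fix u assume u: "u \<in> {1..<u0}"
    have "cut_sum R pos (W \<union> \<Union>(set (take u s))) (drop u s) = 0"
      using less.hyps[OF _ cancel_point_drop[OF cp]] u u0 by auto
    thus "T u = 0" by (simp add: T_def)
  qed
  also have "(\<Sum>u\<in>{u0<..N}. T u) = (\<Sum>v\<in>{1..N - u0}. T (u0 + v))"
  proof -
    have img: "{u0<..N} = (\<lambda>v. u0 + v) ` {1..N - u0}" using u0 by (auto simp: N_def image_iff)
    have "inj_on (\<lambda>v. u0 + v) {1..N - u0}" by (auto simp: inj_on_def)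
    thus ?thesis unfolding img by (simp only: sum.reindex comp_def)
  qed
  finally have sum: "cut_sum R pos W s = T u0 + (\<Sum>v\<in>{1..N - u0}. T (u0 + v))" by simp
  have T_shift: "T (u0 + v) = (if sorted_wrt R (take u0 s) \<and> R (s ! (u0 - 1)) (s ! u0) then
      (if sorted_wrt R (take v s') \<and> pos (W' \<union> \<Union>(set (take v s')))
       then - cut_sum R pos (W' \<union> \<Union>(set (take v s'))) (drop v s') else 0) else 0)" if "1 \<le> v" for v
    using sorted_wrt_take_add[OF assms u0 that] Un_take_drop[of W u0 s v]
    by (simp add: T_def W'_def s'_def add.commute)
  show "cut_sum R pos W s = 0"
  proof (cases "R (s ! (u0 - 1)) (s ! u0)")
    case True
    hence "pos W'" using cp by (simp add: cancel_point_def W'_def)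
    hence "T u0 = (if sorted_wrt R (take u0 s) then - cut_sum R pos W' s' else 0)"
      by (simp add: T_def W'_def s'_def)
    moreover have "(\<Sum>v\<in>{1..N - u0}. T (u0 + v)) = (if sorted_wrt R (take u0 s) then cut_sum R pos W' s' else 0)"
      using T_shift True cut_sum_nonempty[of s' R pos W'] u0 by (auto simp: s'_def N_def intro: sum.cong)
    ultimately show ?thesis using sum by simp
  next
    case False
    hence "\<not> pos W'" using cp by (simp add: cancel_point_def W'_def)
    thus ?thesis using sum T_shift False by (simp add: T_def W'_def)
  qed
qed

section \<open>From ordered partitions to cut sums\<close>

definition pos_partitions :: "('a set \<Rightarrow> bool) \<Rightarrow> 'a set \<Rightarrow> 'a set \<Rightarrow> 'a set list set" where
  "pos_partitions pos U W = {P. (\<forall>I\<in>set P. I \<noteq> {}) \<and> disjoint_list P \<and> \<Union>(set P) = U - W \<and>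
      (\<forall>i\<in>{1..length P}. pos (W \<union> \<Union>(set (take i P))))}"

lemma finite_pos_partitions:
  assumes "finite U"
  shows "finite (pos_partitions pos U W)"
proof (rule finite_subset)
  show "pos_partitions pos U W \<subseteq> {s. set s \<subseteq> Pow U \<and> length s \<le> card U}"
  proof
    fix P assume "P \<in> pos_partitions pos U W"
    hence P: "\<forall>I\<in>set P. I \<noteq> {}" "disjoint_list P" "\<Union>(set P) = U - W" by (auto simp: pos_partitions_def)
    have "\<forall>A\<in>set P. finite A \<and> A \<noteq> {}" using P assms by (auto intro: finite_subset)
    hence "length P \<le> card (\<Union>(set P))" using length_le_card_Union_disjoint_list[OF P(2)] by blast
    also have "\<dots> \<le> card U" using P(3) assms by (simp add: card_mono)
    finally show "P \<in> {s. set s \<subseteq> Pow U \<and> length s \<le> card U}" using P(3) by auto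
  qed
  show "finite {s. set s \<subseteq> Pow U \<and> length s \<le> card U}"
    using assms by (intro finite_lists_length_le) auto
qed

lemma pos_partitions_full [simp]: "pos_partitions pos U U = {[]}"
proof -
  have "P = []" if "P \<in> pos_partitions pos U U" for P
    using that by (cases P) (auto simp: pos_partitions_def)
  thus ?thesis by (auto simp: pos_partitions_def)
qed

lemma pos_partitions_Cons:
  assumes "W \<subseteq> U" "W \<noteq> U"
  shows "pos_partitions pos U W = (\<lambda>(I, P). I # P) `
    (SIGMA I:{I. I \<subseteq> U - W \<and> I \<noteq> {} \<and> pos (W \<union> I)}. pos_partitions pos U (W \<union> I))"
proof (intro set_eqI iffI)
  fix P assume P: "P \<in> pos_partitions pos U W"
  hence p: "\<forall>I\<in>set P. I \<noteq> {}" "disjoint_list P" "\<Union>(set P) = U - W"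
      "\<forall>i\<in>{1..length P}. pos (W \<union> \<Union>(set (take i P)))" by (auto simp: pos_partitions_def)
  obtain I P' where PP: "P = I # P'" using p(3) assms by (cases P) auto
  have "P' \<in> pos_partitions pos U (W \<union> I)"
    unfolding pos_partitions_def
  proof (intro CollectI conjI ballI)
    fix i assume "i \<in> {1..length P'}"
    hence "Suc i \<in> {1..length P}" using PP by auto
    hence "pos (W \<union> \<Union>(set (take (Suc i) P)))" using p(4) by blast
    thus "pos (W \<union> I \<union> \<Union>(set (take i P')))" using PP by (simp add: sup_assoc)
  qed (use p PP in \<open>auto simp: disjoint_list_Cons\<close>)
  moreover have "pos (W \<union> I)" using p(4)[rule_format, of 1] PP by simp
  ultimately show "P \<in> (\<lambda>(I, P). I # P) ` (SIGMA I:{I. I \<subseteq> U - W \<and> I \<noteq> {} \<and> pos (W \<union> I)}.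
      pos_partitions pos U (W \<union> I))"
    using p PP by (auto intro!: image_eqI[of _ _ "(I, P')"])
next
  fix P assume "P \<in> (\<lambda>(I, P). I # P) ` (SIGMA I:{I. I \<subseteq> U - W \<and> I \<noteq> {} \<and> pos (W \<union> I)}.
      pos_partitions pos U (W \<union> I))"
  then obtain I P' where PP: "P = I # P'" and I: "I \<subseteq> U - W" "I \<noteq> {}" "pos (W \<union> I)"
    and P': "P' \<in> pos_partitions pos U (W \<union> I)" by auto
  have p: "\<forall>I\<in>set P'. I \<noteq> {}" "disjoint_list P'" "\<Union>(set P') = U - (W \<union> I)"
      "\<forall>i\<in>{1..length P'}. pos (W \<union> I \<union> \<Union>(set (take i P')))" using P' by (auto simp: pos_partitions_def)
  show "P \<in> pos_partitions pos U W"
    unfolding pos_partitions_def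
  proof (intro CollectI conjI ballI)
    fix i assume i: "i \<in> {1..length P}"
    show "pos (W \<union> \<Union>(set (take i P)))"
    proof (cases i)
      case (Suc j)
      thus ?thesis using I p(4) i PP by (cases j) (auto simp: sup_assoc)
    qed (use i in auto)
  qed (use p I PP in \<open>auto simp: disjoint_list_Cons\<close>)
qed

lemma sum_small_partitions_split:
  assumes "finite S"
  shows "(\<Sum>s\<in>small_partitions S. \<Sum>u\<in>{1..length s}. G (take u s) (drop u s)) =
    (\<Sum>I\<in>{I. I \<subseteq> S \<and> I \<noteq> {}}. \<Sum>g\<in>small_partitions I. \<Sum>t\<in>small_partitions (S - I). G g t)"
proof -
  let ?A = "SIGMA s:small_partitions S. {1..length s}"
  let ?B = "SIGMA I:{I. I \<subseteq> S \<and> I \<noteq> {}}. small_partitions I \<times> small_partitions (S - I)"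
  have fin: "finite {I. I \<subseteq> S \<and> I \<noteq> {}}" "\<And>I. I \<subseteq> S \<Longrightarrow> finite (small_partitions I)"
    "\<And>I. finite (small_partitions (S - I))"
    using assms by (auto intro: finite_small_partitions finite_subset)
  have "(\<Sum>(s, u)\<in>?A. G (take u s) (drop u s)) = (\<Sum>(I, g, t)\<in>?B. G g t)"
  proof (rule sum.reindex_bij_witness[where i = "\<lambda>(I, g, t). (g @ t, length g)"
        and j = "\<lambda>(s, u). (\<Union>(set (take u s)), take u s, drop u s)"])
    fix a assume "a \<in> ?A"
    then obtain s u where a: "a = (s, u)" and s: "\<forall>A\<in>set s. small_block A" "disjoint_list s"
      "\<Union>(set s) = S" "1 \<le> u" "u \<le> length s" by (auto simp: small_partitions_def)
    have "\<Union>(set (take u s)) \<inter> \<Union>(set (drop u s)) = {}"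
      using s(2) disjoint_list_append[of "take u s" "drop u s"] by simp
    moreover have "\<Union>(set (take u s)) \<union> \<Union>(set (drop u s)) = S"
      using s(3) by (metis append_take_drop_id set_append Union_Un_distrib)
    moreover have "s ! 0 \<in> set (take u s)" using s(4,5) by (cases s; cases u) auto
    moreover have "s ! 0 \<in> set s" using s(4,5) by (intro nth_mem) linarith
    hence "s ! 0 \<noteq> {}" using s(1) small_block_nonempty by blast
    ultimately show "(\<lambda>(s, u). (\<Union>(set (take u s)), take u s, drop u s)) a \<in> ?B"
      using a s by (auto simp: small_partitions_def disjoint_list_take disjoint_list_drop
          dest: in_set_takeD in_set_dropD)
    show "(\<lambda>(I, g, t). (g @ t, length g)) ((\<lambda>(s, u). (\<Union>(set (take u s)), take u s, drop u s)) a) = a"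
      using a s by simp
  next
    fix b assume "b \<in> ?B"
    then obtain I g t where b: "b = (I, g, t)" and I: "I \<subseteq> S" "I \<noteq> {}"
      and g: "g \<in> small_partitions I" and t: "t \<in> small_partitions (S - I)" by blast
    hence h: "I \<subseteq> S" "I \<noteq> {}" "\<forall>A\<in>set g. small_block A"
      "disjoint_list g" "\<Union>(set g) = I" "\<forall>A\<in>set t. small_block A" "disjoint_list t" "\<Union>(set t) = S - I"
      by (auto simp: small_partitions_def)
    show "(\<lambda>(s, u). (\<Union>(set (take u s)), take u s, drop u s)) ((\<lambda>(I, g, t). (g @ t, length g)) b) = b"
      using b h by simp
    have "g \<noteq> []" using h by auto
    thus "(\<lambda>(I, g, t). (g @ t, length g)) b \<in> ?A"
      using b h by (auto simp: small_partitions_def disjoint_list_append Suc_le_eq)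
  qed auto
  moreover have "(\<Sum>(s, u)\<in>?A. G (take u s) (drop u s)) =
      (\<Sum>s\<in>small_partitions S. \<Sum>u\<in>{1..length s}. G (take u s) (drop u s))"
    using fin by (subst sum.Sigma) auto
  moreover have "(\<Sum>(I, g, t)\<in>?B. G g t) =
      (\<Sum>I\<in>{I. I \<subseteq> S \<and> I \<noteq> {}}. \<Sum>(g, t)\<in>small_partitions I \<times> small_partitions (S - I). G g t)"
    using fin by (subst sum.Sigma) auto
  moreover have "\<dots> =
      (\<Sum>I\<in>{I. I \<subseteq> S \<and> I \<noteq> {}}. \<Sum>g\<in>small_partitions I. \<Sum>t\<in>small_partitions (S - I). G g t)"
    by (simp add: sum.cartesian_product)
  ultimately show ?thesis by simp
qed

definition partition_poly :: "('a::linorder set \<Rightarrow> bool) \<Rightarrow> 'a set \<Rightarrow> 'a set \<Rightarrow> int poly" where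
  "partition_poly pos U W = (\<Sum>P\<in>pos_partitions pos U W.
     of_int ((-1) ^ length P * shuffle_sign P) * prod_list (map (\<lambda>I. block_poly (card I)) P))"

definition cut_poly ::
    "('a::linorder set \<Rightarrow> 'k::linorder) \<Rightarrow> ('a \<Rightarrow> nat) \<Rightarrow> ('a set \<Rightarrow> bool) \<Rightarrow> 'a set \<Rightarrow> 'a set \<Rightarrow> int poly" where
  "cut_poly key r pos U W = (\<Sum>s\<in>small_partitions (U - W).
     small_weight_list r s * of_int (shuffle_sign s * cut_sum (\<lambda>A B. key A < key B) pos W s))"

lemma partition_poly_first_block:
  assumes "finite U" "W \<subseteq> U" "W \<noteq> U"
  shows "partition_poly pos U W = (\<Sum>I\<in>{I. I \<subseteq> U - W \<and> I \<noteq> {}}. if pos (W \<union> I)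
    then - of_int (inv_sign I (U - (W \<union> I))) * block_poly (card I) * partition_poly pos U (W \<union> I) else 0)"
proof -
  let ?Ix = "{I. I \<subseteq> U - W \<and> I \<noteq> {}}"
  let ?f = "\<lambda>P. of_int ((-1) ^ length P * shuffle_sign P) * prod_list (map (\<lambda>I. block_poly (card I)) P)"
  have Cons: "?f (I # P) = - of_int (inv_sign I (U - (W \<union> I))) * block_poly (card I) * ?f P"
    if "P \<in> pos_partitions pos U (W \<union> I)" for I P
  proof -
    have "\<Union>(set P) = U - (W \<union> I)" using that by (simp add: pos_partitions_def)
    thus ?thesis by (simp add: algebra_simps)
  qed
  have fin: "finite ?Ix" using assms(1) by simp
  have inj: "inj_on (\<lambda>(I, P). I # P) (SIGMA I:{I \<in> ?Ix. pos (W \<union> I)}. pos_partitions pos U (W \<union> I))"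
    by (auto simp: inj_on_def)
  have setI: "{I. I \<subseteq> U - W \<and> I \<noteq> {} \<and> pos (W \<union> I)} = {I \<in> ?Ix. pos (W \<union> I)}" by auto
  have "partition_poly pos U W =
      (\<Sum>(I, P)\<in>(SIGMA I:{I \<in> ?Ix. pos (W \<union> I)}. pos_partitions pos U (W \<union> I)). ?f (I # P))"
    unfolding partition_poly_def pos_partitions_Cons[OF assms(2,3)] setI
    by (subst sum.reindex[OF inj]) (simp add: case_prod_unfold comp_def)
  also have "\<dots> = (\<Sum>I\<in>{I \<in> ?Ix. pos (W \<union> I)}. \<Sum>P\<in>pos_partitions pos U (W \<union> I). ?f (I # P))"
    by (rule sum.Sigma[symmetric]) (use fin assms(1) finite_pos_partitions in auto)
  also have "\<dots> = (\<Sum>I\<in>{I \<in> ?Ix. pos (W \<union> I)}.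
      - of_int (inv_sign I (U - (W \<union> I))) * block_poly (card I) * partition_poly pos U (W \<union> I))"
  proof (rule sum.cong[OF refl])
    fix I assume "I \<in> {I \<in> ?Ix. pos (W \<union> I)}"
    have "(\<Sum>P\<in>pos_partitions pos U (W \<union> I). ?f (I # P)) = (\<Sum>P\<in>pos_partitions pos U (W \<union> I).
        - of_int (inv_sign I (U - (W \<union> I))) * block_poly (card I) * ?f P)"
      by (rule sum.cong[OF refl]) (rule Cons)
    thus "(\<Sum>P\<in>pos_partitions pos U (W \<union> I). ?f (I # P)) =
        - of_int (inv_sign I (U - (W \<union> I))) * block_poly (card I) * partition_poly pos U (W \<union> I)"
      unfolding partition_poly_def by (simp only: sum_distrib_left)
  qed
  also have "\<dots> = (\<Sum>I\<in>?Ix. if pos (W \<union> I)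
      then - of_int (inv_sign I (U - (W \<union> I))) * block_poly (card I) * partition_poly pos U (W \<union> I) else 0)"
    by (simp only: sum.inter_filter[OF fin])
  finally show ?thesis .
qed

definition first_run_term ::
    "('a::linorder set \<Rightarrow> 'k::linorder) \<Rightarrow> ('a \<Rightarrow> nat) \<Rightarrow> ('a set \<Rightarrow> bool) \<Rightarrow> 'a set \<Rightarrow>
      'a set list \<Rightarrow> 'a set list \<Rightarrow> int poly" where
  "first_run_term key r pos W g t = (if sorted_wrt (\<lambda>A B. key A < key B) g \<and> pos (W \<union> \<Union>(set g))
     then - (small_weight_list r (g @ t) *
       of_int (shuffle_sign (g @ t) * cut_sum (\<lambda>A B. key A < key B) pos (W \<union> \<Union>(set g)) t))
     else 0)"

lemma cut_poly_eq_sum_first_runs: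
  assumes "W \<subseteq> U" "W \<noteq> U"
  shows "cut_poly key r pos U W = (\<Sum>s\<in>small_partitions (U - W). \<Sum>u\<in>{1..length s}.
    first_run_term key r pos W (take u s) (drop u s))"
  unfolding cut_poly_def
proof (rule sum.cong[OF refl])
  fix s assume "s \<in> small_partitions (U - W)"
  hence "s \<noteq> []" using assms by (auto simp: small_partitions_def)
  thus "small_weight_list r s * of_int (shuffle_sign s * cut_sum (\<lambda>A B. key A < key B) pos W s) =
      (\<Sum>u\<in>{1..length s}. first_run_term key r pos W (take u s) (drop u s))"
    unfolding cut_sum_nonempty[OF \<open>s \<noteq> []\<close>] first_run_term_def
    by (simp add: sum_distrib_left of_int_sum if_distrib algebra_simps cong: if_cong)
qed

lemma sum_first_run_term:
  fixes key :: "'a::linorder set \<Rightarrow> 'k::linorder"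
  assumes "finite I" "I \<inter> W = {}"
    and expansion: "block_poly (card I) =
      (\<Sum>g\<in>sorted_small_partitions key I. small_weight_list r g * of_int (shuffle_sign g))"
  shows "(\<Sum>g\<in>small_partitions I. \<Sum>t\<in>small_partitions (U - (W \<union> I)). first_run_term key r pos W g t) =
    (if pos (W \<union> I) then - of_int (inv_sign I (U - (W \<union> I))) * block_poly (card I) * cut_poly key r pos U (W \<union> I)
     else 0)"
proof -
  let ?R = "\<lambda>A B. key A < key B"
  let ?F = "\<lambda>g. small_weight_list r g * of_int (shuffle_sign g)"
  let ?c = "- of_int (inv_sign I (U - (W \<union> I)))"
  have split_term: "first_run_term key r pos W g t = (if sorted_wrt ?R g \<and> pos (W \<union> I) then ?c * ?F g *
      (small_weight_list r t * of_int (shuffle_sign t * cut_sum ?R pos (W \<union> I) t)) else 0)"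
    if g: "g \<in> small_partitions I" and t: "t \<in> small_partitions (U - (W \<union> I))" for g t
  proof -
    have "\<Union>(set g) = I" "\<Union>(set t) = U - (W \<union> I)" using g t by (auto simp: small_partitions_def)
    moreover have "disjoint_list (g @ t)" "\<forall>A\<in>set (g @ t). finite A"
      using g t small_block_finite by (auto simp: small_partitions_def disjoint_list_append)
    ultimately have "shuffle_sign (g @ t) = shuffle_sign g * shuffle_sign t * inv_sign I (U - (W \<union> I))"
      using shuffle_sign_append by metis
    thus ?thesis using \<open>\<Union>(set g) = I\<close> unfolding first_run_term_def by (simp add: algebra_simps)
  qed
  have "(\<Sum>t\<in>small_partitions (U - (W \<union> I)). first_run_term key r pos W g t) =
      (if sorted_wrt ?R g \<and> pos (W \<union> I) then ?c * ?F g * cut_poly key r pos U (W \<union> I) else 0)"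
    if g: "g \<in> small_partitions I" for g
  proof (cases "sorted_wrt ?R g \<and> pos (W \<union> I)")
    case True
    hence "(\<Sum>t\<in>small_partitions (U - (W \<union> I)). first_run_term key r pos W g t) =
        (\<Sum>t\<in>small_partitions (U - (W \<union> I)). ?c * ?F g *
          (small_weight_list r t * of_int (shuffle_sign t * cut_sum ?R pos (W \<union> I) t)))"
      using split_term[OF g] by (intro sum.cong) auto
    thus ?thesis using True by (simp add: cut_poly_def sum_distrib_left)
  next
    case False
    have "first_run_term key r pos W g t = 0" if "t \<in> small_partitions (U - (W \<union> I))" for t
      by (simp only: split_term[OF g that] if_not_P[OF False])
    hence "(\<Sum>t\<in>small_partitions (U - (W \<union> I)). first_run_term key r pos W g t) = 0"
      by (rule sum.neutral[OF ballI])
    thus ?thesis by (simp only: if_not_P[OF False])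
  qed
  hence "(\<Sum>g\<in>small_partitions I. \<Sum>t\<in>small_partitions (U - (W \<union> I)). first_run_term key r pos W g t) =
      (\<Sum>g\<in>small_partitions I.
        if sorted_wrt ?R g \<and> pos (W \<union> I) then ?c * ?F g * cut_poly key r pos U (W \<union> I) else 0)"
    by (rule sum.cong[OF refl])
  also have "\<dots> = (if pos (W \<union> I) then ?c * (\<Sum>g\<in>sorted_small_partitions key I. ?F g) * cut_poly key r pos U (W \<union> I)
      else 0)"
  proof -
    have "{g \<in> small_partitions I. sorted_wrt ?R g} = sorted_small_partitions key I"
      by (simp add: sorted_small_partitions_def)
    thus ?thesis using finite_small_partitions[OF assms(1)]
      by (simp add: sum.inter_filter[symmetric] sum_distrib_left sum_distrib_right if_distrib cong: if_cong)
  qed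
  finally show ?thesis using expansion by simp
qed

lemma cut_poly_first_block:
  fixes key :: "'a::linorder set \<Rightarrow> 'k::linorder"
  assumes "finite U" "W \<subseteq> U" "W \<noteq> U"
    and expansion: "\<And>I. I \<subseteq> U \<Longrightarrow> block_poly (card I) =
      (\<Sum>g\<in>sorted_small_partitions key I. small_weight_list r g * of_int (shuffle_sign g))"
  shows "cut_poly key r pos U W = (\<Sum>I\<in>{I. I \<subseteq> U - W \<and> I \<noteq> {}}. if pos (W \<union> I)
    then - of_int (inv_sign I (U - (W \<union> I))) * block_poly (card I) * cut_poly key r pos U (W \<union> I) else 0)"
proof -
  have "cut_poly key r pos U W = (\<Sum>I\<in>{I. I \<subseteq> U - W \<and> I \<noteq> {}}.
      \<Sum>g\<in>small_partitions I. \<Sum>t\<in>small_partitions (U - W - I). first_run_term key r pos W g t)"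
    unfolding cut_poly_eq_sum_first_runs[OF assms(2,3)] using assms(1) by (intro sum_small_partitions_split) simp
  also have "\<dots> = (\<Sum>I\<in>{I. I \<subseteq> U - W \<and> I \<noteq> {}}. if pos (W \<union> I)
      then - of_int (inv_sign I (U - (W \<union> I))) * block_poly (card I) * cut_poly key r pos U (W \<union> I) else 0)"
  proof (rule sum.cong[OF refl])
    fix I assume I: "I \<in> {I. I \<subseteq> U - W \<and> I \<noteq> {}}"
    hence I': "finite I" "I \<inter> W = {}" "U - W - I = U - (W \<union> I)" "I \<subseteq> U"
      using assms(1) finite_subset by auto
    show "(\<Sum>g\<in>small_partitions I. \<Sum>t\<in>small_partitions (U - W - I). first_run_term key r pos W g t) =
        (if pos (W \<union> I) then - of_int (inv_sign I (U - (W \<union> I))) * block_poly (card I) *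
          cut_poly key r pos U (W \<union> I) else 0)"
      unfolding I'(3) by (rule sum_first_run_term[OF I'(1,2) expansion[OF I'(4)]])
  qed
  finally show ?thesis .
qed

lemma partition_poly_eq_cut_poly:
  fixes key :: "'a::linorder set \<Rightarrow> 'k::linorder"
  assumes "finite U"
    and expansion: "\<And>I. I \<subseteq> U \<Longrightarrow> block_poly (card I) =
      (\<Sum>g\<in>sorted_small_partitions key I. small_weight_list r g * of_int (shuffle_sign g))"
  shows "W \<subseteq> U \<Longrightarrow> partition_poly pos U W = cut_poly key r pos U W"
proof (induction "card (U - W)" arbitrary: W rule: less_induct)
  case less
  show ?case
  proof (cases "W = U")
    case True
    thus ?thesis by (simp add: partition_poly_def cut_poly_def)
  next
    case False
    have IH: "partition_poly pos U (W \<union> I) = cut_poly key r pos U (W \<union> I)" if "I \<subseteq> U - W" "I \<noteq> {}" for I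
    proof (rule less.hyps)
      show "card (U - (W \<union> I)) < card (U - W)" using that assms(1) by (intro psubset_card_mono) auto
    qed (use that less.prems in auto)
    have "partition_poly pos U W = (\<Sum>I\<in>{I. I \<subseteq> U - W \<and> I \<noteq> {}}. if pos (W \<union> I)
        then - of_int (inv_sign I (U - (W \<union> I))) * block_poly (card I) * partition_poly pos U (W \<union> I) else 0)"
      by (rule partition_poly_first_block[OF assms(1) less.prems False])
    also have "\<dots> = (\<Sum>I\<in>{I. I \<subseteq> U - W \<and> I \<noteq> {}}. if pos (W \<union> I)
        then - of_int (inv_sign I (U - (W \<union> I))) * block_poly (card I) * cut_poly key r pos U (W \<union> I) else 0)"
      using IH by (intro sum.cong refl) auto
    also have "\<dots> = cut_poly key r pos U W"
      by (rule cut_poly_first_block[OF assms(1) less.prems False expansion, symmetric])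
    finally show ?thesis .
  qed
qed


section \<open>Genericity and the existence of cancel points\<close>

lemma delta_le:
  assumes "J \<subseteq> {1..n}" "sJ lam J > 0"
  shows "delta n lam \<le> sJ lam J / real (card J)"
proof -
  have "{sJ lam J / real (card J) | J. J \<subseteq> {1..n} \<and> sJ lam J > 0} =
      (\<lambda>J. sJ lam J / real (card J)) ` {J. J \<subseteq> {1..n} \<and> sJ lam J > 0}" by auto
  hence "finite {sJ lam J / real (card J) | J. J \<subseteq> {1..n} \<and> sJ lam J > 0}" by simp
  thus ?thesis unfolding delta_def using assms by (intro Min_le) auto
qed

lemma delta_attained:
  assumes "sJ lam {1..n} > 0"
  obtains J where "J \<subseteq> {1..n}" "sJ lam J > 0" "sJ lam J / real (card J) = delta n lam"
proof -
  let ?D = "{sJ lam J / real (card J) | J. J \<subseteq> {1..n} \<and> sJ lam J > 0}"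
  have "?D = (\<lambda>J. sJ lam J / real (card J)) ` {J. J \<subseteq> {1..n} \<and> sJ lam J > 0}" by auto
  hence "finite ?D" by simp
  moreover have "?D \<noteq> {}" using assms by auto
  ultimately have "Min ?D \<in> ?D" by (rule Min_in)
  thus ?thesis using that by (auto simp: delta_def)
qed

lemma Nlam_le_card:
  assumes "J \<subseteq> {1..n}" "sJ lam J / real (card J) = delta n lam"
  shows "Nlam n lam \<le> card J"
proof -
  have "{card J | J. J \<subseteq> {1..n} \<and> sJ lam J / real (card J) = delta n lam} =
      card ` {J. J \<subseteq> {1..n} \<and> sJ lam J / real (card J) = delta n lam}" by auto
  hence "finite {card J | J. J \<subseteq> {1..n} \<and> sJ lam J / real (card J) = delta n lam}" by simp
  thus ?thesis unfolding Nlam_def using assms by (intro Min_le) auto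
qed

text \<open>\<open>N(\<lambda>) = n\<close> means that the whole set is the only minimiser of the average, so the
  average over every proper subset with positive sum is strictly larger.\<close>

lemma total_average_less:
  assumes "sJ lam {1..n} > 0" "Nlam n lam = n"
    and S: "S \<subseteq> {1..n}" "S \<noteq> {1..n}" "sJ lam S > 0"
  shows "sJ lam {1..n} / real n < sJ lam S / real (card S)"
proof -
  have eq_full: "J = {1..n}" if "J \<subseteq> {1..n}" "sJ lam J / real (card J) = delta n lam" for J
  proof -
    have "n \<le> card J" using Nlam_le_card[OF that] assms(2) by simp
    moreover have "card J \<le> n" using card_mono[OF _ that(1)] by simp
    ultimately have "card J = card {1..n}" by simp
    thus ?thesis using that(1) by (intro card_subset_eq) auto
  qed
  obtain J where "J \<subseteq> {1..n}" "sJ lam J / real (card J) = delta n lam"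
    using delta_attained[OF assms(1)] by blast
  hence "delta n lam = sJ lam {1..n} / real n" using eq_full[of J] by simp
  moreover have "sJ lam S / real (card S) \<noteq> delta n lam" using eq_full S by blast
  ultimately show ?thesis using delta_le[OF S(1,3)] by simp
qed

definition excess :: "(nat \<Rightarrow> real) \<Rightarrow> nat set \<Rightarrow> nat set \<Rightarrow> real" where
  "excess lam U S = sJ lam S - sJ lam U / real (card U) * real (card S)"

lemma excess_Un:
  "finite A \<Longrightarrow> finite B \<Longrightarrow> A \<inter> B = {} \<Longrightarrow> excess lam U (A \<union> B) = excess lam U A + excess lam U B"
  by (simp add: excess_def sJ_Un card_Un_disjoint algebra_simps add_divide_distrib)

lemma excess_self: "finite U \<Longrightarrow> U \<noteq> {} \<Longrightarrow> excess lam U U = 0"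
  by (simp add: excess_def)

lemma excess_pos_iff_average_greater:
  "finite S \<Longrightarrow> S \<noteq> {} \<Longrightarrow> excess lam U S > 0 \<longleftrightarrow> sJ lam S / real (card S) > sJ lam U / real (card U)"
  by (simp add: excess_def field_simps card_gt_0_iff)

lemma excess_neg_iff_average_less:
  "finite S \<Longrightarrow> S \<noteq> {} \<Longrightarrow> excess lam U S < 0 \<longleftrightarrow> sJ lam S / real (card S) < sJ lam U / real (card U)"
  by (simp add: excess_def field_simps card_gt_0_iff)

lemma excess_proper_subset:
  assumes posU: "sJ lam U > 0" and U: "finite U"
    and gen: "\<And>S. S \<subseteq> U \<Longrightarrow> S \<noteq> U \<Longrightarrow> sJ lam S > 0 \<Longrightarrow> sJ lam S / real (card S) > sJ lam U / real (card U)"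
    and S: "S \<subseteq> U" "S \<noteq> {}" "S \<noteq> U"
  shows "excess lam U S \<noteq> 0" "sJ lam S > 0 \<longleftrightarrow> excess lam U S > 0"
proof -
  have fS: "finite S" using S U finite_subset by blast
  have "card U > 0" using U S by (auto simp: card_gt_0_iff)
  hence d: "sJ lam U / real (card U) > 0" using posU by simp
  show pos_iff: "sJ lam S > 0 \<longleftrightarrow> excess lam U S > 0"
  proof
    assume "excess lam U S > 0"
    hence "sJ lam S / real (card S) > 0"
      using excess_pos_iff_average_greater[OF fS S(2), where lam = lam and U = U] d by linarith
    thus "sJ lam S > 0" using fS S(2) by (simp add: zero_less_divide_iff card_gt_0_iff)
  qed (use gen S excess_pos_iff_average_greater[OF fS S(2), where lam = lam and U = U] in blast)
  show "excess lam U S \<noteq> 0"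
  proof
    assume "excess lam U S = 0"
    hence "sJ lam S = sJ lam U / real (card U) * real (card S)" by (simp add: excess_def)
    moreover have "real (card S) > 0" using fS S(2) by (simp add: card_gt_0_iff)
    ultimately have "sJ lam S > 0" using d by (metis mult_pos_pos)
    thus False using pos_iff \<open>excess lam U S = 0\<close> by simp
  qed
qed

text \<open>If no position were a cancel point, the averages of consecutive blocks would move away from
  the total average in the direction of the sign of the excess of the first block, and the excess of
  the prefix unions would keep that sign up to the whole set, whose excess is zero.\<close>

lemma cancel_point_exists:
  fixes key :: "nat set \<Rightarrow> real \<times> 'k::linorder"
  assumes U: "finite U" and posU: "sJ lam U > 0"
    and gen: "\<And>S. S \<subseteq> U \<Longrightarrow> S \<noteq> U \<Longrightarrow> sJ lam S > 0 \<Longrightarrow> sJ lam S / real (card S) > sJ lam U / real (card U)"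
    and key_avg: "\<And>A. fst (key A) = - (sJ lam A / real (card A))"
    and inj: "inj_on key {A. small_block A \<and> A \<subseteq> U}"
    and s: "s \<in> small_partitions U" and len: "length s \<ge> 2"
  shows "\<exists>w. cancel_point (\<lambda>A B. key A < key B) (\<lambda>S. sJ lam S > 0) {} s w"
proof (rule ccontr)
  assume no_cp: "\<nexists>w. cancel_point (\<lambda>A B. key A < key B) (\<lambda>S. sJ lam S > 0) {} s w"
  let ?R = "\<lambda>A B. key A < key B"
  define N where "N = length s"
  define St where "St = (\<lambda>u. \<Union>(set (take u s)))"
  define d where "d = sJ lam U / real (card U)"
  define avg where "avg = (\<lambda>A. sJ lam A / real (card A))"
  let ?m = "excess lam U"
  have sp: "\<forall>A\<in>set s. small_block A" "disjoint_list s" "\<Union>(set s) = U" using s by (auto simp: small_partitions_def)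
  have blocks: "small_block (s ! i)" "s ! i \<subseteq> U" if "i < N" for i
    using that sp by (auto simp: N_def)
  have H: "?R (s ! (u - 1)) (s ! u) \<longleftrightarrow> \<not> sJ lam (St u) > 0" if "1 \<le> u" "u < N" for u
    using no_cp that unfolding cancel_point_def N_def St_def by auto
  have St_Suc: "St (Suc u) = St u \<union> s ! u" "St u \<inter> s ! u = {}" if "u < N" for u
    using Union_take_Suc disjoint_list_Union_take_nth[OF sp(2)] that by (simp_all add: St_def N_def)
  have St_sub: "St u \<subseteq> U" for u using sp by (auto simp: St_def dest: in_set_takeD)
  have St_fin: "finite (St u)" for u using St_sub U finite_subset by blast
  have St_1: "St 1 = s ! 0" using len by (cases s) (auto simp: St_def)
  have St_proper: "St u \<noteq> {}" "St u \<noteq> U" if u: "1 \<le> u" "u < N" for u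
  proof -
    obtain A s0 u' where "s = A # s0" "u = Suc u'" using u len by (cases s; cases u) auto
    hence "s ! 0 \<subseteq> St u" by (simp add: St_def)
    thus "St u \<noteq> {}" using small_block_nonempty[OF blocks(1)] that by auto
    show "St u \<noteq> U" using St_Suc(2)[OF that(2)] blocks[OF that(2)] small_block_nonempty by blast
  qed
  have excess_facts: "?m (St u) \<noteq> 0" "sJ lam (St u) > 0 \<longleftrightarrow> ?m (St u) > 0" if "1 \<le> u" "u < N" for u
    using excess_proper_subset[of lam U "St u"] posU U gen St_sub St_proper[OF that] by blast+
  have m_Suc: "?m (St (Suc u)) = ?m (St u) + ?m (s ! u)" if "u < N" for u
    using St_Suc[OF that] excess_Un St_fin small_block_finite[OF blocks(1)[OF that]] by simp
  have avg_R: "avg B \<le> avg A" if "?R A B" for A B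
    using that key_avg[of A] key_avg[of B] by (auto simp: avg_def less_prod_def)
  have avg_not_R: "avg (s ! (u - 1)) \<le> avg (s ! u)" if "\<not> ?R (s ! (u - 1)) (s ! u)" "1 \<le> u" "u < N" for u
  proof -
    have "distinct s" using disjoint_list_distinct[OF sp(2)] sp(1) small_block_nonempty by blast
    hence "s ! (u - 1) \<noteq> s ! u" using that(2,3) by (simp add: N_def nth_eq_iff_index_eq)
    moreover have "s ! (u - 1) \<in> {A. small_block A \<and> A \<subseteq> U}" "s ! u \<in> {A. small_block A \<and> A \<subseteq> U}"
      using blocks[of "u - 1"] blocks[of u] that(2,3) by auto
    ultimately have "key (s ! (u - 1)) \<noteq> key (s ! u)" by (rule inj_on_contraD[OF inj])
    hence "key (s ! u) < key (s ! (u - 1))" using that(1) by (simp add: not_less order.not_eq_order_implies_strict)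
    thus ?thesis by (rule avg_R)
  qed
  have m_block: "?m A > 0 \<longleftrightarrow> avg A > d" "?m A < 0 \<longleftrightarrow> avg A < d" if "small_block A" for A
    using excess_pos_iff_average_greater excess_neg_iff_average_less small_block_finite[OF that]
      small_block_nonempty[OF that] by (simp_all add: avg_def d_def)
  have N: "2 \<le> N" using len by (simp add: N_def)
  have m0: "?m (s ! 0) \<noteq> 0" using excess_facts(1)[of 1] N St_1 by simp
  have "St N = U" using sp(3) by (simp add: St_def N_def)
  moreover have "U \<noteq> {}" using St_proper(1)[of 1] St_sub[of 1] N by auto
  ultimately have "?m (St N) = 0" using excess_self[OF U] by simp
  consider "?m (s ! 0) > 0" | "?m (s ! 0) < 0" using m0 by linarith
  thus False
  proof cases
    case 1
    have "avg (s ! (u - 1)) > d \<and> ?m (St u) > 0" if "1 \<le> u" "u \<le> N" for u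
      using that
    proof (induction u rule: nat_induct_at_least)
      case base
      show ?case using 1 St_1 m_block(1)[OF blocks(1)] N by simp
    next
      case (Suc u)
      hence u: "1 \<le> u" "u < N" and IH: "avg (s ! (u - 1)) > d" "?m (St u) > 0" by auto
      have "sJ lam (St u) > 0" using excess_facts(2)[OF u] IH(2) by simp
      hence "avg (s ! (u - 1)) \<le> avg (s ! u)" using H[OF u] avg_not_R[OF _ u] by simp
      hence "avg (s ! u) > d" using IH by simp
      thus ?case using m_block(1)[OF blocks(1)[OF u(2)]] m_Suc[OF u(2)] IH by simp
    qed
    from this[of N] show False using \<open>?m (St N) = 0\<close> N by simp
  next
    case 2
    have "avg (s ! (u - 1)) < d \<and> ?m (St u) < 0" if "1 \<le> u" "u \<le> N" for u
      using that
    proof (induction u rule: nat_induct_at_least)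
      case base
      show ?case using 2 St_1 m_block(2)[OF blocks(1)] N by simp
    next
      case (Suc u)
      hence u: "1 \<le> u" "u < N" and IH: "avg (s ! (u - 1)) < d" "?m (St u) < 0" by auto
      have "\<not> sJ lam (St u) > 0" using excess_facts(2)[OF u] IH(2) by simp
      hence "avg (s ! u) \<le> avg (s ! (u - 1))" using H[OF u] avg_R by blast
      hence "avg (s ! u) < d" using IH by simp
      thus ?case using m_block(2)[OF blocks(1)[OF u(2)]] m_Suc[OF u(2)] IH by simp
    qed
    from this[of N] show False using \<open>?m (St N) = 0\<close> N by simp
  qed
qed

section \<open>The generating polynomial of admissible ordered partitions vanishes\<close>

lemma prod_block_poly:
  "prod_list (map (\<lambda>I. block_poly (card I)) P) =
    (-1) ^ ((\<Sum>I\<leftarrow>P. card I * (card I - 1)) div 2) * tvar ^ odd_blocks P"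
proof (induction P)
  case (Cons I P)
  have "even (card I * (card I - 1))" by (cases "even (card I)") auto
  hence "(card I * (card I - 1) + (\<Sum>I\<leftarrow>P. card I * (card I - 1))) div 2 =
      card I * (card I - 1) div 2 + (\<Sum>I\<leftarrow>P. card I * (card I - 1)) div 2"
    by (simp add: div_plus_div_distrib_dvd_left)
  moreover have "odd_blocks (I # P) = (if odd (card I) then 1 else 0) + odd_blocks P"
    by (simp add: odd_blocks_def)
  ultimately show ?case using Cons by (simp add: block_poly_def tri_sign_def power_add algebra_simps)
qed (simp add: odd_blocks_def)

lemma Pord_eq_pos_partitions: "Pord n lam = pos_partitions (\<lambda>S. sJ lam S > 0) {1..n} {}"
proof -
  have "sJ lam (\<Union>(set (take i P))) = sum_list (map (sJ lam) (take i P))"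
    if "disjoint_list P" "\<Union>(set P) = {1..n}" for P :: "nat set list" and i
  proof -
    have "\<forall>A\<in>set (take i P). finite A"
      using that(2) by (metis Sup_upper finite_atLeastAtMost finite_subset in_set_takeD)
    thus ?thesis using sJ_Union_disjoint_list[OF disjoint_list_take[OF that(1)]] by blast
  qed
  thus ?thesis
    by (auto simp: Pord_def ord_partitions_def pos_partitions_def disjoint_list_def[symmetric])
qed

lemma ord_partition_poly_eq_partition_poly:
  "(\<Sum>P\<in>Pord n lam. of_int ((-1) ^ length P * eps P * eps' P) * tvar ^ odd_blocks P) =
    partition_poly (\<lambda>S. sJ lam S > 0) {1..n} {}"
  unfolding partition_poly_def Pord_eq_pos_partitions[symmetric]
proof (rule sum.cong[OF refl])
  fix P assume "P \<in> Pord n lam"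
  hence "P \<in> ord_partitions n" by (simp add: Pord_def)
  hence "eps P = shuffle_sign P" by (rule eps_eq_shuffle_sign)
  thus "of_int ((-1) ^ length P * eps P * eps' P) * tvar ^ odd_blocks P =
      of_int ((-1) ^ length P * shuffle_sign P) * prod_list (map (\<lambda>I. block_poly (card I)) P)"
    unfolding prod_block_poly by (simp add: eps'_def)
qed

lemma card_le_twice_length_small_partition:
  assumes "s \<in> small_partitions U" "finite U"
  shows "card U \<le> 2 * length s"
proof -
  have s: "\<forall>A\<in>set s. small_block A" "disjoint_list s" "\<Union>(set s) = U"
    using assms(1) by (auto simp: small_partitions_def)
  hence "card U = sum_list (map card s)"
    using card_Union_disjoint_list small_block_finite by blast
  also have "\<dots> \<le> sum_list (map (\<lambda>_. 2) s)"
    by (rule sum_list_mono) (use s(1) in \<open>auto simp: small_block_def\<close>)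
  finally show ?thesis by (simp add: sum_list_triv)
qed

lemma cut_poly_slope_key_vanishes:
  assumes "n \<ge> 3" "sJ lam {1..n} > 0" "Nlam n lam = n"
  shows "cut_poly (slope_key lam {1..n}) (slope_rank lam {1..n}) (\<lambda>S. sJ lam S > 0) {1..n} {} = 0"
  unfolding cut_poly_def
proof (intro sum.neutral ballI)
  let ?R = "\<lambda>A B. slope_key lam {1..n} A < slope_key lam {1..n} B"
  fix s assume s: "s \<in> small_partitions ({1..n} - {})"
  hence "length s \<ge> 2" using card_le_twice_length_small_partition[of s "{1..n}"] assms(1) by simp
  hence "\<exists>w. cancel_point ?R (\<lambda>S. sJ lam S > 0) {} s w"
    using cancel_point_exists[of "{1..n}" lam "slope_key lam {1..n}" s] total_average_less[OF assms(2,3)]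
      inj_on_slope_key s assms(2) by (simp add: slope_key_def)
  moreover have "transp ?R" by (auto simp: transp_def)
  ultimately have "cut_sum ?R (\<lambda>S. sJ lam S > 0) {} s = 0" using cut_sum_cancel_point by blast
  thus "small_weight_list (slope_rank lam {1..n}) s *
      of_int (shuffle_sign s * cut_sum ?R (\<lambda>S. sJ lam S > 0) {} s) = 0"
    by simp
qed

lemma ord_partition_poly_vanishes:
  assumes "n \<ge> 3" "sJ lam {1..n} > 0" "Nlam n lam = n"
  shows "(\<Sum>P\<in>Pord n lam. of_int ((-1) ^ length P * eps P * eps' P) * tvar ^ odd_blocks P) = 0"
proof -
  have "partition_poly (\<lambda>S. sJ lam S > 0) {1..n} {} =
      cut_poly (slope_key lam {1..n}) (slope_rank lam {1..n}) (\<lambda>S. sJ lam S > 0) {1..n} {}"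
    using block_poly_slope_key_expansion by (intro partition_poly_eq_cut_poly) auto
  thus ?thesis using ord_partition_poly_eq_partition_poly cut_poly_slope_key_vanishes[OF assms] by simp
qed

lemma coeff_of_int_mult_tvar_power: "coeff (of_int c * tvar ^ m) i = (if m = i then c else 0)"
proof -
  have "tvar ^ m = monom 1 m" by (simp add: tvar_def monom_altdef)
  moreover have "(of_int c :: int poly) = monom c 0" by (simp add: of_int_monom)
  ultimately have "of_int c * tvar ^ m = monom c m" by (simp add: mult_monom)
  thus ?thesis by (simp add: coeff_monom)
qed

theorem mainTheorem10:
  fixes n k :: nat and lam :: "nat \<Rightarrow> real"
  assumes "n \<ge> 3"
    and "sJ lam {1..n} > 0"
    and "Nlam n lam = n"
    and "k \<ge> 1"
  shows "(\<Sum>P\<in>Pord_k n lam k. (-1) ^ length P * eps P * eps' P) = (0::int)"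
proof -
  let ?w = "\<lambda>P. (-1) ^ length P * eps P * eps' P"
  let ?F = "\<Sum>P\<in>Pord n lam. of_int (?w P) * tvar ^ odd_blocks P"
  have "finite (Pord n lam)" by (simp add: Pord_eq_pos_partitions finite_pos_partitions)
  hence "(\<Sum>P\<in>Pord_k n lam k. ?w P) =
      (\<Sum>P\<in>Pord n lam. if odd_blocks P = 2 * k \<or> odd_blocks P = 2 * k + 1 then ?w P else 0)"
    unfolding Pord_k_def by (simp only: sum.inter_filter)
  also have "\<dots> = (\<Sum>P\<in>Pord n lam. coeff (of_int (?w P) * tvar ^ odd_blocks P) (2 * k) +
      coeff (of_int (?w P) * tvar ^ odd_blocks P) (2 * k + 1))"
    by (intro sum.cong refl) (simp only: coeff_of_int_mult_tvar_power, auto)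
  also have "\<dots> = coeff ?F (2 * k) + coeff ?F (2 * k + 1)"
    by (simp add: coeff_sum sum.distrib)
  also have "\<dots> = 0" using ord_partition_poly_vanishes[OF assms(1-3)] by simp
  finally show ?thesis .
qed

end
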